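(* Let $p$ be a monotone graph parameter such that $p(G\uplus H)=\max(p(G),p(H))$ for all graphs $G,H$. For every integer $r\ge2$, a class of graphs $\mathcal{G}$ is fractionally-$p$-edge-fragile if and only if $\mathcal{A}_{\mathcal{G}}^{(r)}$ is $p$-pliable.
   Context: $p$ monotone means $p(H)\le p(G)$ for every subgraph $H$ of $G$; $\uplus$ is disjoint union. A class $\mathcal{G}$ is fractionally-$p$-edge-fragile if for every $\varepsilon>0$ there is $k$ such that every $G\in\mathcal{G}$ has a probability distribution $\pi$ over sets $F\subseteq E(G)$ with $p(G-F)\le k$ such that $\Pr_{F\sim\pi}[e\in F]\le\varepsilon$ for every $e\in E(G)$. A $\sigma$-structure $\mathbb{A}$ is a finite domain $A$ with functions $f^{\mathbb{A}}\colon A^{\mathrm{ar}(f)}\to\mathbb{Q}_{\ge0}$, $f\in\sigma$. $\mathrm{opt}(\mathbb{A},\mathbb{B})=\max_{h\colon A\to B}\sum_{f}\sum_{\bar x}f^{\mathbb{A}}(\bar x)f^{\mathbb{B}}(h(\bar x))$ over all maps; $d_{\mathrm{opt}}(\mathbb{A},\mathbb{B})=\sup_{\mathbb{C}}|\ln\mathrm{opt}(\mathbb{A},\mathbb{C})-\ln\mathrm{opt}(\mathbb{B},\mathbb{C})|$ over $\sigma$-structures $\mathbb{C}$ ($\ln0=-\infty$, $|\ln0-\ln0|=0$). The Gaifman graph of $\mathbb{A}$: vertex set $A$, distinct $u,v$ adjacent iff they occur together in a tuple of positive value; $p(\mathbb{A})$ is $p$ of it. A class $\mathcal{A}$ is $p$-pliable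 if for every $\varepsilon>0$ there is $k$ such that every $\mathbb{A}\in\mathcal{A}$ (signature $\sigma$) has a $\sigma$-structure $\mathbb{B}$ with $p(\mathbb{B})\le k$ and $d_{\mathrm{opt}}(\mathbb{A},\mathbb{B})\le\varepsilon$. $\mathcal{A}_{\mathcal{G}}^{(r)}$ is the class of all structures (any signature) whose Gaifman graph is in $\mathcal{G}$ and whose symbols all have arity at most $r$. *)

theory Defs
  imports "HOL-Probability.Probability_Mass_Function" "HOL-Library.FuncSet" "HOL-Library.Extended_Real"
begin

type_synonym 'v graph = "'v set \<times> 'v set set"

definition verts :: "'v graph \<Rightarrow> 'v set" where "verts G = fst G"
definition edges :: "'v graph \<Rightarrow> 'v set set" where "edges G = snd G"

definition wf_graph :: "'v graph \<Rightarrow> bool" where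
  "wf_graph G \<longleftrightarrow> finite (verts G) \<and> (\<forall>e\<in>edges G. e \<subseteq> verts G \<and> card e = 2)"

definition subgraph :: "'v graph \<Rightarrow> 'v graph \<Rightarrow> bool" where
  "subgraph H G \<longleftrightarrow> wf_graph H \<and> verts H \<subseteq> verts G \<and> edges H \<subseteq> edges G"

definition graph_iso :: "'v graph \<Rightarrow> 'v graph \<Rightarrow> bool" where
  "graph_iso G H \<longleftrightarrow> (\<exists>f. bij_betw f (verts G) (verts H) \<and> edges H = (\<lambda>e. f ` e) ` edges G)"

definition graph_union :: "'v graph \<Rightarrow> 'v graph \<Rightarrow> 'v graph" where
  "graph_union G H = (verts G \<union> verts H, edges G \<union> edges H)"

definition delete_edges :: "'v graph \<Rightarrow> 'v set set \<Rightarrow> 'v graph" where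
  "delete_edges G F = (verts G, edges G - F)"

definition graph_parameter :: "('v graph \<Rightarrow> nat) \<Rightarrow> bool" where
  "graph_parameter p \<longleftrightarrow> (\<forall>G H. wf_graph G \<longrightarrow> wf_graph H \<longrightarrow> graph_iso G H \<longrightarrow> p G = p H)"

definition monotone_param :: "('v graph \<Rightarrow> nat) \<Rightarrow> bool" where
  "monotone_param p \<longleftrightarrow> (\<forall>G H. wf_graph G \<longrightarrow> subgraph H G \<longrightarrow> p H \<le> p G)"

text \<open>Disjoint union (vertex sets disjoint; arbitrary graphs are reduced to this case via
  isomorphism invariance).\<close>
definition max_on_disjoint_union :: "('v graph \<Rightarrow> nat) \<Rightarrow> bool" where
  "max_on_disjoint_union p \<longleftrightarrow> (\<forall>G H. wf_graph G \<longrightarrow> wf_graph H \<longrightarrow> verts G \<inter> verts H = {} \<longrightarrow>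
      p (graph_union G H) = max (p G) (p H))"

definition frac_edge_fragile :: "('v graph \<Rightarrow> nat) \<Rightarrow> 'v graph set \<Rightarrow> bool" where
  "frac_edge_fragile p \<G> \<longleftrightarrow>
    (\<forall>\<epsilon>::real. \<epsilon> > 0 \<longrightarrow> (\<exists>k::nat. \<forall>G\<in>\<G>. \<exists>\<pi> :: 'v set set pmf.
        (\<forall>F\<in>set_pmf \<pi>. F \<subseteq> edges G \<and> p (delete_edges G F) \<le> k) \<and>
        (\<forall>e\<in>edges G. measure_pmf.prob \<pi> {F. e \<in> F} \<le> \<epsilon>)))"

type_synonym signature = "nat set \<times> (nat \<Rightarrow> nat)"
type_synonym 'v struct = "'v set \<times> (nat \<Rightarrow> 'v list \<Rightarrow> rat)"

definition sig_syms :: "signature \<Rightarrow> nat set" where "sig_syms s = fst s"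
definition sig_ar :: "signature \<Rightarrow> nat \<Rightarrow> nat" where "sig_ar s = snd s"

definition dom :: "'v struct \<Rightarrow> 'v set" where "dom S = fst S"
definition interp :: "'v struct \<Rightarrow> nat \<Rightarrow> 'v list \<Rightarrow> rat" where "interp S = snd S"

definition tuples :: "'v set \<Rightarrow> nat \<Rightarrow> 'v list set" where
  "tuples A n = {xs. length xs = n \<and> set xs \<subseteq> A}"

definition is_sig :: "signature \<Rightarrow> bool" where
  "is_sig s \<longleftrightarrow> finite (sig_syms s)"

definition is_struct :: "signature \<Rightarrow> 'v struct \<Rightarrow> bool" where
  "is_struct s S \<longleftrightarrow> finite (dom S) \<and> dom S \<noteq> {} \<and>
     (\<forall>f\<in>sig_syms s. \<forall>xs\<in>tuples (dom S) (sig_ar s f). interp S f xs \<ge> 0)"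

definition opt :: "signature \<Rightarrow> 'v struct \<Rightarrow> 'v struct \<Rightarrow> real" where
  "opt s SA SB = Max ((\<lambda>h. \<Sum>f\<in>sig_syms s. \<Sum>xs\<in>tuples (dom SA) (sig_ar s f).
        of_rat (interp SA f xs) * of_rat (interp SB f (map h xs))) ` (dom SA \<rightarrow>\<^sub>E dom SB))"

definition ln_dist :: "real \<Rightarrow> real \<Rightarrow> ereal" where
  "ln_dist a b = (if a = 0 \<and> b = 0 then 0
                  else if a = 0 \<or> b = 0 then \<infinity>
                  else ereal \<bar>ln a - ln b\<bar>)"

definition d_opt :: "signature \<Rightarrow> 'v struct \<Rightarrow> 'v struct \<Rightarrow> ereal" where
  "d_opt s SA SB = (SUP SC\<in>{SC :: 'v struct. is_struct s SC}. ln_dist (opt s SA SC) (opt s SB SC))"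

definition gaifman :: "signature \<Rightarrow> 'v struct \<Rightarrow> 'v graph" where
  "gaifman s S = (dom S, {{u, v} | u v. u \<noteq> v \<and>
      (\<exists>f\<in>sig_syms s. \<exists>xs\<in>tuples (dom S) (sig_ar s f).
          interp S f xs > 0 \<and> u \<in> set xs \<and> v \<in> set xs)})"

definition struct_class :: "'v graph set \<Rightarrow> nat \<Rightarrow> (signature \<times> 'v struct) set" where
  "struct_class \<G> r = {(s, S). is_sig s \<and> is_struct s S \<and>
      (\<forall>f\<in>sig_syms s. sig_ar s f \<le> r) \<and> gaifman s S \<in> \<G>}"

definition pliable :: "('v graph \<Rightarrow> nat) \<Rightarrow> (signature \<times> 'v struct) set \<Rightarrow> bool" where
  "pliable p \<A> \<longleftrightarrow>
    (\<forall>\<epsilon>::real. \<epsilon> > 0 \<longrightarrow> (\<exists>k::nat. \<forall>(s, SA)\<in>\<A>. \<exists>SB :: 'v struct.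
        is_struct s SB \<and> p (gaifman s SB) \<le> k \<and> d_opt s SA SB \<le> ereal \<epsilon>))"

end

theory Submission
  imports Defs
begin

(*
  Fragile implies pliable.  Let \<pi> be a distribution on deletion sets F of the Gaifman graph G
  of A that hits every edge with small probability.  Let B consist of disjoint copies of A, one
  for each F in the support of \<pi>, weighted by a rational approximation of \<pi>(F), where copy F
  forgets every tuple containing an edge of F.  Each copy maps wherever A maps, so
  opt(B, C) \<le> opt(A, C).  Conversely, an optimal map of A, used on every copy, loses only the
  tuples meeting a deleted edge, and a tuple of arity at most r meets one with probability at
  most 2^r times the edge probability; hence opt(B, C) \<ge> e^-\<epsilon> opt(A, C).  The Gaifman graph
  of B lies in the disjoint union of the graphs G - F, so p stays bounded.

  Pliable implies fragile.  By the multiplicative weights method it suffices to find, for every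
  positive rational edge weighting w of G of total weight 1, a set F with p(G - F) \<le> k and
  w(F) small.  Encode (G, w) as a structure A: a binary symbol carrying w and, for every vertex,
  a unary symbol carrying its weighted degree at that vertex only.  Take B close to A with
  p(Gaifman B) \<le> k.  Three test structures produce maps g : B \<rightarrow> V and h : V \<rightarrow> B under which
  almost all weight sits on edges that h maps onto Gaifman edges of B and on vertices x with
  g (h x) = x.  Deleting the remaining edges leaves a graph that embeds into the Gaifman graph
  of B up to isolated vertices.
*)

section \<open>Tuples and values of maps\<close>

lemma dom_pair [simp]: "dom (A, I) = A" and interp_pair [simp]: "interp (A, I) = I"
  unfolding dom_def interp_def by simp_all

lemma verts_pair [simp]: "verts (V, E) = V" and edges_pair [simp]: "edges (V, E) = E"
  unfolding verts_def edges_def by simp_all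

lemma graph_eq_pair: "G = (verts G, edges G)"
  unfolding verts_def edges_def by simp

lemma finite_tuples [simp]: "finite A \<Longrightarrow> finite (tuples A n)"
  unfolding tuples_def using finite_lists_length_eq[of A n] by (simp add: conj_commute)

lemma map_in_tuples: "xs \<in> tuples A n \<Longrightarrow> h ` A \<subseteq> B \<Longrightarrow> map h xs \<in> tuples B n"
  unfolding tuples_def by auto

lemma tuples_Suc_0: "tuples D (Suc 0) = (\<lambda>y. [y]) ` D"
  unfolding tuples_def by (auto simp: length_Suc_conv)

lemma tuples_2: "tuples D 2 = (\<lambda>(u, v). [u, v]) ` (D \<times> D)"
  unfolding tuples_def by (auto simp: length_Suc_conv numeral_2_eq_2)

lemma tuples_image:
  assumes "inj_on g V"
  shows "tuples (g ` V) n = map g ` tuples V n"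
proof
  show "map g ` tuples V n \<subseteq> tuples (g ` V) n" unfolding tuples_def by (auto simp: subset_iff)
  show "tuples (g ` V) n \<subseteq> map g ` tuples V n"
  proof
    fix ys assume ys: "ys \<in> tuples (g ` V) n"
    then have "ys = map g (map (inv_into V g) ys)"
      unfolding tuples_def by (auto simp: f_inv_into_f intro!: map_idI[symmetric])
    moreover have "map (inv_into V g) ys \<in> tuples V n"
      using ys unfolding tuples_def by (auto intro: inv_into_into)
    ultimately show "ys \<in> map g ` tuples V n" by blast
  qed
qed

lemma inj_on_map_tuples: "inj_on g V \<Longrightarrow> inj_on (map g) (tuples V n)"
  by (rule inj_on_mapI, erule inj_on_subset) (auto simp: tuples_def)

definition hom_value :: "signature \<Rightarrow> 'v struct \<Rightarrow> 'v struct \<Rightarrow> ('v \<Rightarrow> 'v) \<Rightarrow> real" where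
  "hom_value s A C h = (\<Sum>f\<in>sig_syms s. \<Sum>xs\<in>tuples (dom A) (sig_ar s f).
        of_rat (interp A f xs) * of_rat (interp C f (map h xs)))"

lemma opt_eq_Max_hom_value: "opt s A C = Max (hom_value s A C ` (dom A \<rightarrow>\<^sub>E dom C))"
  unfolding opt_def hom_value_def ..

lemma hom_value_cong:
  assumes "\<And>x. x \<in> dom A \<Longrightarrow> h x = h' x"
  shows "hom_value s A C h = hom_value s A C h'"
proof -
  have map_eq: "map h xs = map h' xs" if "xs \<in> tuples (dom A) n" for xs n
    using that assms by (auto simp: tuples_def intro!: map_cong)
  show ?thesis unfolding hom_value_def by (intro sum.cong refl) (simp add: map_eq)
qed

lemma hom_value_le_opt:
  assumes "finite (dom A)" "finite (dom C)" "h ` dom A \<subseteq> dom C"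
  shows "hom_value s A C h \<le> opt s A C"
proof -
  have "hom_value s A C h = hom_value s A C (restrict h (dom A))"
    by (rule hom_value_cong) simp
  moreover have "restrict h (dom A) \<in> dom A \<rightarrow>\<^sub>E dom C" using assms(3) by auto
  ultimately show ?thesis unfolding opt_eq_Max_hom_value
    using assms by (intro Max_ge) (auto intro: finite_PiE)
qed

lemma opt_attained:
  assumes "finite (dom A)" "finite (dom C)" "dom C \<noteq> {}"
  obtains h where "h \<in> dom A \<rightarrow>\<^sub>E dom C" "opt s A C = hom_value s A C h"
proof -
  have "finite (hom_value s A C ` (dom A \<rightarrow>\<^sub>E dom C))"
    using assms by (auto intro: finite_PiE)
  moreover have "hom_value s A C ` (dom A \<rightarrow>\<^sub>E dom C) \<noteq> {}"
    using assms(3) by (auto simp: PiE_eq_empty_iff)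
  ultimately show ?thesis using Max_in that unfolding opt_eq_Max_hom_value by blast
qed

lemma hom_value_nonneg:
  assumes "is_struct s A" "is_struct s C" "h ` dom A \<subseteq> dom C"
  shows "0 \<le> hom_value s A C h"
  unfolding hom_value_def
proof (intro sum_nonneg)
  fix f xs assume f: "f \<in> sig_syms s" and xs: "xs \<in> tuples (dom A) (sig_ar s f)"
  have "map h xs \<in> tuples (dom C) (sig_ar s f)" using map_in_tuples[OF xs assms(3)] .
  then show "0 \<le> real_of_rat (interp A f xs) * real_of_rat (interp C f (map h xs))"
    using assms f xs unfolding is_struct_def by auto
qed

lemma opt_nonneg:
  assumes "is_struct s A" "is_struct s C"
  shows "0 \<le> opt s A C"
proof -
  obtain c where "c \<in> dom C" using assms(2) unfolding is_struct_def by auto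
  then have "(\<lambda>_. c) ` dom A \<subseteq> dom C" by auto
  then show ?thesis using hom_value_nonneg[OF assms] hom_value_le_opt[of A C "\<lambda>_. c"] assms
    unfolding is_struct_def by (meson order.trans)
qed

lemma hom_value_mono_interp:
  assumes "dom A' = dom A" "is_struct s C" "h ` dom A \<subseteq> dom C"
    and "\<And>f xs. f \<in> sig_syms s \<Longrightarrow> xs \<in> tuples (dom A) (sig_ar s f) \<Longrightarrow>
           interp A' f xs \<le> interp A f xs"
  shows "hom_value s A' C h \<le> hom_value s A C h"
  unfolding hom_value_def assms(1)
proof (intro sum_mono)
  fix f xs assume f: "f \<in> sig_syms s" and xs: "xs \<in> tuples (dom A) (sig_ar s f)"
  have "0 \<le> interp C f (map h xs)"
    using assms(2) f map_in_tuples[OF xs assms(3)] unfolding is_struct_def by auto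
  then show "of_rat (interp A' f xs) * of_rat (interp C f (map h xs))
      \<le> (of_rat (interp A f xs) * of_rat (interp C f (map h xs)) :: real)"
    using assms(4)[OF f xs] by (intro mult_right_mono) (auto simp: of_rat_less_eq)
qed

lemma ln_dist_commute: "ln_dist a b = ln_dist b a"
  unfolding ln_dist_def by (auto simp: abs_minus_commute)

lemma ln_dist_le_imp_ge:
  assumes "ln_dist a b \<le> ereal e" "a > 0" "b \<ge> 0"
  shows "exp (-e) * a \<le> b"
proof -
  have b: "b > 0" using assms unfolding ln_dist_def by (cases "b = 0") auto
  have "\<bar>ln a - ln b\<bar> \<le> e" using assms b unfolding ln_dist_def by auto
  then have "exp (ln a - e) \<le> exp (ln b)" by simp
  then show ?thesis using assms b by (simp add: exp_diff exp_minus field_simps)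
qed

lemma ln_dist_leI:
  assumes "0 \<le> b" "b \<le> a" "exp (-e) * a \<le> b" "0 \<le> e"
  shows "ln_dist a b \<le> ereal e"
proof (cases "a = 0")
  case True
  then show ?thesis using assms unfolding ln_dist_def by auto
next
  case False
  then have a: "a > 0" using assms by auto
  have b: "b > 0" using a assms(3) by (smt (verit) exp_gt_zero mult_pos_pos)
  have "ln (exp (-e) * a) \<le> ln b" using assms(3) a b by simp
  then have "-e + ln a \<le> ln b" using a by (simp add: ln_mult)
  moreover have "ln b \<le> ln a" using assms a b by simp
  ultimately show ?thesis using a b unfolding ln_dist_def by auto
qed

lemma d_opt_commute: "d_opt s A B = d_opt s B A"
  unfolding d_opt_def by (simp add: ln_dist_commute)

lemma d_opt_le_imp_opt_ge:
  assumes "d_opt s A B \<le> ereal e" "is_struct s B" "is_struct s C" "0 < c" "c \<le> opt s A C"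
  shows "exp (-e) * c \<le> opt s B C"
proof -
  have "ln_dist (opt s A C) (opt s B C) \<le> d_opt s A B"
    unfolding d_opt_def using assms(3) by (intro SUP_upper) auto
  then have "exp (-e) * opt s A C \<le> opt s B C"
    using assms opt_nonneg[OF assms(2,3)] by (intro ln_dist_le_imp_ge) auto
  moreover have "exp (-e) * c \<le> exp (-e) * opt s A C" using assms(5) by simp
  ultimately show ?thesis by linarith
qed

lemma d_opt_leI:
  fixes A B :: "'a struct"
  assumes "\<And>C. is_struct s C \<Longrightarrow> opt s B C \<le> opt s A C"
    and "\<And>C. is_struct s C \<Longrightarrow> exp (-e) * opt s A C \<le> opt s B C"
    and "is_struct s B" "0 \<le> e"
  shows "d_opt s A B \<le> ereal e"
  unfolding d_opt_def
proof (intro SUP_least ln_dist_leI)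
  fix C :: "'a struct" assume "C \<in> {C. is_struct s C}"
  then show "0 \<le> opt s B C" using opt_nonneg assms(3) by blast
qed (use assms in auto)

section \<open>Graph parameters and Gaifman graphs\<close>

lemma graph_parameterD:
  "graph_parameter p \<Longrightarrow> wf_graph G \<Longrightarrow> wf_graph H \<Longrightarrow> graph_iso G H \<Longrightarrow> p G = p H"
  unfolding graph_parameter_def by blast

lemma monotone_paramD: "monotone_param p \<Longrightarrow> wf_graph G \<Longrightarrow> subgraph H G \<Longrightarrow> p H \<le> p G"
  unfolding monotone_param_def by blast

lemma max_on_disjoint_unionD:
  "max_on_disjoint_union p \<Longrightarrow> wf_graph G \<Longrightarrow> wf_graph H \<Longrightarrow> verts G \<inter> verts H = {} \<Longrightarrow>
     p (graph_union G H) = max (p G) (p H)"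
  unfolding max_on_disjoint_union_def by blast

lemma finite_edges: "wf_graph G \<Longrightarrow> finite (edges G)"
  unfolding wf_graph_def by (meson Pow_iff finite_Pow_iff finite_subset subsetI)

definition graph_image :: "('v \<Rightarrow> 'w) \<Rightarrow> 'v graph \<Rightarrow> 'w graph" where
  "graph_image f H = (f ` verts H, (\<lambda>e. f ` e) ` edges H)"

lemma wf_graph_image:
  assumes "wf_graph H" "inj_on f (verts H)"
  shows "wf_graph (graph_image f H)"
  using assms unfolding wf_graph_def graph_image_def
  by (auto simp: card_image inj_on_subset)

lemma param_graph_image:
  assumes "graph_parameter p" "wf_graph H" "inj_on f (verts H)"
  shows "p (graph_image f H) = p H"
proof -
  have "graph_iso H (graph_image f H)"
    unfolding graph_iso_def graph_image_def using assms(3)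
    by (intro exI[of _ f]) (auto simp: inj_on_imp_bij_betw)
  then show ?thesis
    using graph_parameterD[OF assms(1,2) wf_graph_image[OF assms(2,3)]] by simp
qed

definition graph_Union :: "'i set \<Rightarrow> ('i \<Rightarrow> 'v graph) \<Rightarrow> 'v graph" where
  "graph_Union I H = (\<Union>i\<in>I. verts (H i), \<Union>i\<in>I. edges (H i))"

lemma param_graph_Union_le:
  assumes mu: "max_on_disjoint_union p" and I: "finite I" "I \<noteq> {}"
    and H: "\<And>i. i \<in> I \<Longrightarrow> wf_graph (H i) \<and> p (H i) \<le> k"
    and disj: "\<And>i j. i \<in> I \<Longrightarrow> j \<in> I \<Longrightarrow> i \<noteq> j \<Longrightarrow> verts (H i) \<inter> verts (H j) = {}"
  shows "wf_graph (graph_Union I H) \<and> p (graph_Union I H) \<le> k"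
  using I H disj
proof (induction I rule: finite_ne_induct)
  case (singleton i)
  then show ?case unfolding graph_Union_def by (simp flip: graph_eq_pair)
next
  case (insert i I)
  have union: "graph_Union (insert i I) H = graph_union (H i) (graph_Union I H)"
    unfolding graph_Union_def graph_union_def by simp
  have IH: "wf_graph (graph_Union I H)" "p (graph_Union I H) \<le> k" using insert by auto
  have Hi: "wf_graph (H i)" "p (H i) \<le> k" using insert by auto
  have "verts (H i) \<inter> verts (graph_Union I H) = {}"
    unfolding graph_Union_def using insert by fastforce
  then have "p (graph_Union (insert i I) H) = max (p (H i)) (p (graph_Union I H))"
    unfolding union by (rule max_on_disjoint_unionD[OF mu Hi(1) IH(1)])
  moreover have "wf_graph (graph_Union (insert i I) H)"
    using Hi(1) IH(1) unfolding union graph_union_def wf_graph_def by auto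
  ultimately show ?case using Hi IH by simp
qed

lemma param_edgeless_le:
  assumes gp: "graph_parameter p" and mo: "monotone_param p" and mu: "max_on_disjoint_union p"
    and X: "finite X" and H: "wf_graph H" "verts H \<noteq> {}"
  shows "p (X, {}) \<le> p H"
proof -
  obtain b where b: "b \<in> verts H" using H by auto
  have wf_single: "wf_graph ({x}, {})" for x :: 'a unfolding wf_graph_def by simp
  have "p ({b}, {}) \<le> p H"
    using monotone_paramD[OF mo H(1)] b wf_single unfolding subgraph_def by auto
  moreover have "p ({x}, {}) = p ({b}, {})" for x
  proof (rule graph_parameterD[OF gp wf_single wf_single])
    show "graph_iso ({x}, {}) ({b}, {})" unfolding graph_iso_def
      by (intro exI[of _ "\<lambda>_. b"]) (auto simp: bij_betw_def)
  qed
  ultimately have single: "wf_graph ({x}, {}) \<and> p ({x}, {}) \<le> p H" for x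
    using wf_single by metis
  show ?thesis
  proof (cases "X = {}")
    case True
    have "subgraph ({}, {}) H" unfolding subgraph_def wf_graph_def by simp
    then show ?thesis using True monotone_paramD[OF mo H(1)] by simp
  next
    case False
    have "(X, {}) = graph_Union X (\<lambda>x. ({x}, {}))" unfolding graph_Union_def by simp
    then show ?thesis using param_graph_Union_le[OF mu X False single] by simp
  qed
qed

lemma param_delete_edges_le:
  assumes gp: "graph_parameter p" and mo: "monotone_param p" and mu: "max_on_disjoint_union p"
    and G: "wf_graph G" and H: "wf_graph H" "verts H \<noteq> {}"
    and X: "X \<subseteq> verts G" and h: "inj_on h (verts G - X)" "h ` verts G \<subseteq> verts H"
    and kept: "\<And>e. e \<in> edges G - F \<Longrightarrow> e \<inter> X = {} \<and> h ` e \<in> edges H"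
  shows "p (delete_edges G F) \<le> p H"
proof -
  define G' where "G' = (verts G - X, edges G - F)"
  have wfG': "wf_graph G'" using G kept unfolding G'_def wf_graph_def by auto
  have finX: "finite X" using G X finite_subset unfolding wf_graph_def by blast
  have "delete_edges G F = graph_union G' (X, {})"
    unfolding delete_edges_def graph_union_def G'_def using X by auto
  moreover have "p (graph_union G' (X, {})) = max (p G') (p (X, {}))"
    by (rule max_on_disjoint_unionD[OF mu wfG']) (use finX in \<open>auto simp: G'_def wf_graph_def\<close>)
  moreover have "p G' \<le> p H"
  proof -
    have "subgraph (graph_image h G') H"
      unfolding subgraph_def
      using wf_graph_image[OF wfG'] h kept by (auto simp: G'_def graph_image_def)
    then have "p (graph_image h G') \<le> p H" by (rule monotone_paramD[OF mo H(1)])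
    then show ?thesis using param_graph_image[OF gp wfG', of h] h(1) by (simp add: G'_def)
  qed
  moreover have "p (X, {}) \<le> p H" by (rule param_edgeless_le[OF gp mo mu finX H])
  ultimately show ?thesis by simp
qed

lemma verts_gaifman [simp]: "verts (gaifman s S) = dom S"
  unfolding gaifman_def by simp

lemma edges_gaifman: "edges (gaifman s S) = {{u, v} | u v. u \<noteq> v \<and>
      (\<exists>f\<in>sig_syms s. \<exists>xs\<in>tuples (dom S) (sig_ar s f).
          interp S f xs > 0 \<and> u \<in> set xs \<and> v \<in> set xs)}"
  unfolding gaifman_def by simp

lemma wf_graph_gaifman: "is_struct s S \<Longrightarrow> wf_graph (gaifman s S)"
  unfolding wf_graph_def edges_gaifman is_struct_def by (auto simp: tuples_def)

lemma gaifman_edgeI: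
  assumes "f \<in> sig_syms s" "xs \<in> tuples (dom S) (sig_ar s f)" "interp S f xs > 0"
    "u \<in> set xs" "v \<in> set xs" "u \<noteq> v"
  shows "{u, v} \<in> edges (gaifman s S)"
  unfolding edges_gaifman using assms by blast

section \<open>Multiplicative weights\<close>

definition hits :: "'a set list \<Rightarrow> 'a \<Rightarrow> nat" where
  "hits L e = length (filter (\<lambda>F. e \<in> F) L)"

definition potential :: "'a set \<Rightarrow> 'a set list \<Rightarrow> nat" where
  "potential E L = (\<Sum>e\<in>E. 2 ^ hits L e)"

definition mw_weight :: "'a set \<Rightarrow> 'a set list \<Rightarrow> 'a \<Rightarrow> rat" where
  "mw_weight E L e = 2 ^ hits L e / of_nat (potential E L)"

lemma potential_pos: "finite E \<Longrightarrow> E \<noteq> {} \<Longrightarrow> 0 < potential E L"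
  unfolding potential_def by (simp add: sum_pos)

lemma mw_weight_pos: "finite E \<Longrightarrow> E \<noteq> {} \<Longrightarrow> 0 < mw_weight E L e"
  unfolding mw_weight_def using potential_pos[of E L] by simp

lemma of_rat_mw_weight: "(of_rat (mw_weight E L e) :: real) = 2 ^ hits L e / real (potential E L)"
  unfolding mw_weight_def by (simp add: of_rat_divide of_rat_power)

lemma sum_mw_weight:
  assumes "finite E" "E \<noteq> {}"
  shows "(\<Sum>e\<in>E. (of_rat (mw_weight E L e) :: real)) = 1"
proof -
  have "(\<Sum>e\<in>E. (2::real) ^ hits L e) = real (potential E L)" unfolding potential_def by simp
  then show ?thesis using potential_pos[OF assms, of L]
    by (simp add: of_rat_mw_weight flip: sum_divide_distrib)
qed

lemma potential_snoc:
  assumes "finite E" "E \<noteq> {}" "F \<subseteq> E"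
  shows "real (potential E (L @ [F])) = real (potential E L) * (1 + (\<Sum>e\<in>F. of_rat (mw_weight E L e)))"
proof -
  have "real (potential E (L @ [F])) = (\<Sum>e\<in>E. 2 ^ hits L e + (if e \<in> F then 2 ^ hits L e else 0))"
    unfolding potential_def hits_def by (auto intro!: sum.cong)
  also have "\<dots> = real (potential E L) + (\<Sum>e\<in>F. 2 ^ hits L e)"
    using assms by (simp add: potential_def sum.distrib sum.If_cases Int_absorb1)
  also have "(\<Sum>e\<in>F. (2::real) ^ hits L e) = real (potential E L) * (\<Sum>e\<in>F. of_rat (mw_weight E L e))"
    using potential_pos[OF assms(1,2), of L]
    by (simp add: of_rat_mw_weight flip: sum_divide_distrib)
  finally show ?thesis by (simp add: algebra_simps)
qed

lemma greedy_history:
  assumes fin: "finite E" and ne: "E \<noteq> {}" and \<delta>: "\<delta> \<ge> 0"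
    and light: "\<And>w::'a \<Rightarrow> rat. (\<And>e. e \<in> E \<Longrightarrow> w e > 0) \<Longrightarrow> (\<Sum>e\<in>E. (of_rat (w e)::real)) = 1 \<Longrightarrow>
              \<exists>F\<subseteq>E. good F \<and> (\<Sum>e\<in>F. (of_rat (w e)::real)) \<le> \<delta>"
  shows "\<exists>L. length L = T \<and> (\<forall>F\<in>set L. F \<subseteq> E \<and> good F) \<and>
             real (potential E L) \<le> real (card E) * (1 + \<delta>) ^ T"
proof (induction T)
  case 0
  show ?case by (intro exI[of _ "[]"]) (simp add: potential_def hits_def)
next
  case (Suc T)
  then obtain L where L: "length L = T" "\<forall>F\<in>set L. F \<subseteq> E \<and> good F"
    "real (potential E L) \<le> real (card E) * (1 + \<delta>) ^ T" by blast
  obtain F where F: "F \<subseteq> E" "good F" "(\<Sum>e\<in>F. (of_rat (mw_weight E L e)::real)) \<le> \<delta>"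
    using light[of "mw_weight E L"] mw_weight_pos[OF fin ne] sum_mw_weight[OF fin ne] by blast
  have "real (potential E (L @ [F])) \<le> real (potential E L) * (1 + \<delta>)"
    unfolding potential_snoc[OF fin ne F(1)] using F(3) by (intro mult_left_mono) auto
  also have "\<dots> \<le> real (card E) * (1 + \<delta>) ^ Suc T"
    using L(3) \<delta> by (simp add: mult_right_mono)
  finally show ?case using L F by (intro exI[of _ "L @ [F]"]) auto
qed

lemma prob_uniform_nth:
  assumes "L \<noteq> []"
  shows "measure_pmf.prob (map_pmf ((!) L) (pmf_of_set {..<length L})) {F. e \<in> F}
           = real (hits L e) / real (length L)"
proof -
  have "card ({..<length L} \<inter> {i. e \<in> L ! i}) = hits L e"
    unfolding hits_def length_filter_conv_card by (rule arg_cong[where f = card]) auto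
  then show ?thesis using assms by (subst measure_map_pmf, subst measure_pmf_of_set) auto
qed

lemma hits_le_of_potential_le:
  assumes fin: "finite E" and e: "e \<in> E" and \<delta>: "\<delta> > 0"
    and pot: "real (potential E L) \<le> real (card E) * (1 + \<delta>) ^ T"
    and T: "ln (real (card E)) \<le> real T * \<delta>"
  shows "real (hits L e) \<le> 4 * \<delta> * real T"
proof -
  have card: "0 < card E" using fin e card_gt_0_iff by blast
  have "(2::real) ^ hits L e \<le> real (potential E L)"
    unfolding potential_def using member_le_sum[OF e _ fin, of "\<lambda>e. (2::real) ^ hits L e"] by simp
  then have "(2::real) ^ hits L e \<le> real (card E) * (1 + \<delta>) ^ T" using pot by linarith
  then have "ln ((2::real) ^ hits L e) \<le> ln (real (card E) * (1 + \<delta>) ^ T)"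
    using card \<delta> by (subst ln_le_cancel_iff) auto
  then have "real (hits L e) * ln 2 \<le> ln (real (card E) * (1 + \<delta>) ^ T)"
    by (simp add: ln_realpow)
  also have "\<dots> = ln (real (card E)) + real T * ln (1 + \<delta>)"
    using card \<delta> by (simp add: ln_mult ln_realpow)
  also have "\<dots> \<le> 2 * \<delta> * real T"
    using T ln_le_minus_one[of "1 + \<delta>"] \<delta> mult_left_mono[of "ln (1 + \<delta>)" \<delta> "real T"]
    by (simp add: algebra_simps)
  finally show ?thesis using ln_diff_le[of 1 2] mult_left_mono[of "1/2" "ln 2" "real (hits L e)"]
    by simp
qed

text \<open>The distribution is uniform over the sets chosen in T rounds, where each round picks a
  light set for the current weights and doubles the weight of its elements.  Only rational weights
  are offered, since below they become values of a structure.\<close>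

lemma multiplicative_weights:
  assumes fin: "finite E" and ne: "E \<noteq> {}" and \<delta>: "\<delta> > 0"
    and light: "\<And>w::'a \<Rightarrow> rat. (\<And>e. e \<in> E \<Longrightarrow> w e > 0) \<Longrightarrow> (\<Sum>e\<in>E. (of_rat (w e)::real)) = 1 \<Longrightarrow>
              \<exists>F\<subseteq>E. good F \<and> (\<Sum>e\<in>F. (of_rat (w e)::real)) \<le> \<delta>"
  shows "\<exists>\<pi>::'a set pmf. (\<forall>F\<in>set_pmf \<pi>. F \<subseteq> E \<and> good F) \<and>
            (\<forall>e\<in>E. measure_pmf.prob \<pi> {F. e \<in> F} \<le> 4 * \<delta>)"
proof -
  define T where "T = nat \<lceil>ln (real (card E)) / \<delta>\<rceil> + 1"
  have "ln (real (card E)) / \<delta> \<le> real T" unfolding T_def by linarith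
  then have T: "1 \<le> T" "ln (real (card E)) \<le> real T * \<delta>"
    using \<delta> by (auto simp: T_def field_simps)
  obtain L where L: "length L = T" "\<forall>F\<in>set L. F \<subseteq> E \<and> good F"
    and pot: "real (potential E L) \<le> real (card E) * (1 + \<delta>) ^ T"
    using greedy_history[OF fin ne _ light] \<delta> by (metis less_imp_le)
  define \<pi> where "\<pi> = map_pmf ((!) L) (pmf_of_set {..<length L})"
  have L_ne: "L \<noteq> []" using L(1) T(1) by auto
  then have "set_pmf \<pi> = set L"
    unfolding \<pi>_def by (subst set_map_pmf, subst set_pmf_of_set) (auto simp: set_conv_nth)
  moreover have "measure_pmf.prob \<pi> {F. e \<in> F} \<le> 4 * \<delta>" if e: "e \<in> E" for e
  proof -
    have "measure_pmf.prob \<pi> {F. e \<in> F} = real (hits L e) / real T"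
      using prob_uniform_nth[OF L_ne, of e] unfolding \<pi>_def L(1) .
    then show ?thesis
      using hits_le_of_potential_le[OF fin e \<delta> pot T(2)] T(1) by (simp add: pos_divide_le_eq)
  qed
  ultimately show ?thesis using L(2) by (intro exI[of _ \<pi>]) auto
qed

section \<open>Pliability implies fractional fragility\<close>

definition graph_sig :: "('v \<Rightarrow> nat) \<Rightarrow> 'v set \<Rightarrow> signature" where
  "graph_sig idx V = (insert 0 (Suc ` idx ` V), \<lambda>f. if f = 0 then 2 else 1)"

lemma sig_syms_graph_sig: "sig_syms (graph_sig idx V) = insert 0 (Suc ` idx ` V)"
  and sig_ar_graph_sig: "sig_ar (graph_sig idx V) f = (if f = 0 then 2 else 1)"
  unfolding graph_sig_def sig_syms_def sig_ar_def by simp_all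

lemma hom_value_graph_sig:
  assumes "inj_on idx V" "finite V"
  shows "hom_value (graph_sig idx V) X Y h =
    (\<Sum>ys\<in>tuples (dom X) 2. of_rat (interp X 0 ys) * of_rat (interp Y 0 (map h ys))) +
    (\<Sum>x\<in>V. \<Sum>y\<in>dom X. of_rat (interp X (Suc (idx x)) [y]) * of_rat (interp Y (Suc (idx x)) [h y]))"
proof -
  let ?T = "\<lambda>f. \<Sum>xs\<in>tuples (dom X) (sig_ar (graph_sig idx V) f).
        real_of_rat (interp X f xs) * real_of_rat (interp Y f (map h xs))"
  have unary: "?T (Suc (idx x)) = (\<Sum>y\<in>dom X.
      of_rat (interp X (Suc (idx x)) [y]) * of_rat (interp Y (Suc (idx x)) [h y]))" for x
    by (simp add: sig_ar_graph_sig tuples_Suc_0 sum.reindex inj_on_def)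
  have "hom_value (graph_sig idx V) X Y h = ?T 0 + (\<Sum>f\<in>Suc ` idx ` V. ?T f)"
    unfolding hom_value_def sig_syms_graph_sig using assms(2) by (subst sum.insert) auto
  also have "(\<Sum>f\<in>Suc ` idx ` V. ?T f) = (\<Sum>x\<in>V. ?T (Suc (idx x)))"
    using sum.reindex[of "Suc \<circ> idx" V ?T] assms(1) by (simp add: image_comp inj_on_def)
  finally show ?thesis by (simp only: unary) (simp add: sig_ar_graph_sig)
qed

definition edge_list :: "'v set \<Rightarrow> 'v list" where
  "edge_list e = (SOME xs. distinct xs \<and> set xs = e)"

lemma edge_list:
  assumes "card e = 2"
  obtains a b where "edge_list e = [a, b]" "e = {a, b}" "a \<noteq> b"
proof -
  have "finite e" using assms card.infinite by fastforce
  then have "distinct (edge_list e) \<and> set (edge_list e) = e"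
    unfolding edge_list_def by (metis (mono_tags, lifting) finite_distinct_list someI_ex)
  then have "length (edge_list e) = 2" "set (edge_list e) = e" "distinct (edge_list e)"
    using assms distinct_card by fastforce+
  then show ?thesis using that by (auto simp: numeral_2_eq_2 length_Suc_conv)
qed

definition weighted_degree :: "'v set set \<Rightarrow> ('v set \<Rightarrow> rat) \<Rightarrow> 'v \<Rightarrow> rat" where
  "weighted_degree E w x = (\<Sum>e\<in>E. if x \<in> e then w e else 0)"

definition graph_struct :: "'v set \<Rightarrow> 'v set set \<Rightarrow> ('v set \<Rightarrow> rat) \<Rightarrow> ('v \<Rightarrow> nat) \<Rightarrow> 'v struct" where
  "graph_struct V E w idx = (V, \<lambda>f xs.
     if f = 0 then (\<Sum>e\<in>E. if xs = edge_list e then w e else 0)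
     else (\<Sum>x\<in>V. if f = Suc (idx x) \<and> xs = [x] then weighted_degree E w x else 0))"

lemma dom_graph_struct [simp]: "dom (graph_struct V E w idx) = V"
  unfolding graph_struct_def by simp

definition edge_test :: "'v set \<Rightarrow> 'v set set \<Rightarrow> 'v struct" where
  "edge_test V E = (V, \<lambda>f xs. if f = 0 \<and> set xs \<in> E then 1 else 0)"

definition vertex_test :: "'v set \<Rightarrow> ('v \<Rightarrow> nat) \<Rightarrow> 'v struct" where
  "vertex_test V idx = (V, \<lambda>f xs. if f \<noteq> 0 \<and> xs \<noteq> [] \<and> f = Suc (idx (hd xs)) then 1 else 0)"

text \<open>At the identity of B the decoding test is worth at least the edge test and the vertex
  test at any maps from B together; at h : V \<rightarrow> B it counts the weight of the edges that h maps
  onto Gaifman edges of B and of the vertices x with g (h x) = x.\<close>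

definition decoding_test :: "'v struct \<Rightarrow> ('v \<Rightarrow> nat) \<Rightarrow> ('v \<Rightarrow> 'v) \<Rightarrow> 'v struct" where
  "decoding_test B idx g = (dom B, \<lambda>f xs.
     if f = 0 then (if interp B 0 xs > 0 \<and> xs ! 0 \<noteq> xs ! 1 then 1 else 0)
     else if xs \<noteq> [] \<and> f = Suc (idx (g (hd xs))) then 1 else 0)"

lemma hom_value_decoding_test_ge:
  assumes idx: "inj_on idx V" and V: "finite V"
    and B: "is_struct (graph_sig idx V) B"
    and g1: "g1 ` dom B \<subseteq> V" and g: "g ` dom B \<subseteq> V"
    and E: "\<And>e. e \<in> E \<Longrightarrow> card e = 2"
  shows "hom_value (graph_sig idx V) B (edge_test V E) g1 + hom_value (graph_sig idx V) B (vertex_test V idx) g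
       \<le> hom_value (graph_sig idx V) B (decoding_test B idx g) id"
proof -
  let ?s = "graph_sig idx V"
  have "hom_value ?s B (edge_test V E) g1
      = (\<Sum>ys\<in>tuples (dom B) 2. of_rat (interp B 0 ys) * of_rat (interp (edge_test V E) 0 (map g1 ys)))"
    by (simp add: hom_value_graph_sig[OF idx V] edge_test_def)
  also have "\<dots> \<le> (\<Sum>ys\<in>tuples (dom B) 2.
      of_rat (interp B 0 ys) * of_rat (interp (decoding_test B idx g) 0 (map id ys)))"
  proof (rule sum_mono)
    fix ys assume ys: "ys \<in> tuples (dom B) 2"
    obtain a b where ab: "ys = [a, b]" using ys by (auto simp: tuples_2)
    have "0 \<le> interp B 0 ys"
      using B ys unfolding is_struct_def by (auto simp: sig_syms_graph_sig sig_ar_graph_sig)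
    moreover have "a \<noteq> b" if "{g1 a, g1 b} \<in> E" using E[OF that] by auto
    ultimately show "of_rat (interp B 0 ys) * of_rat (interp (edge_test V E) 0 (map g1 ys))
      \<le> (of_rat (interp B 0 ys) * of_rat (interp (decoding_test B idx g) 0 (map id ys)) :: real)"
      using ab by (auto simp: edge_test_def decoding_test_def)
  qed
  finally show ?thesis
    by (simp add: hom_value_graph_sig[OF idx V] vertex_test_def decoding_test_def)
qed

definition unfaithful :: "'v set \<Rightarrow> ('v \<Rightarrow> 'v) \<Rightarrow> ('v \<Rightarrow> 'v) \<Rightarrow> 'v set" where
  "unfaithful V g h = {x\<in>V. g (h x) \<noteq> x}"

definition broken_edges :: "'v set set \<Rightarrow> 'v set \<Rightarrow> 'v graph \<Rightarrow> ('v \<Rightarrow> 'v) \<Rightarrow> 'v set set" where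
  "broken_edges E X H h = {e\<in>E. e \<inter> X \<noteq> {} \<or> h ` e \<notin> edges H}"

context
  fixes V :: "'v set" and E :: "'v set set" and w :: "'v set \<Rightarrow> rat" and idx :: "'v \<Rightarrow> nat"
  assumes G: "wf_graph (V, E)" and idx: "inj_on idx V" and w: "\<And>e. e \<in> E \<Longrightarrow> w e > 0"
begin

lemma finite_V: "finite V" and edge_card: "e \<in> E \<Longrightarrow> e \<subseteq> V \<and> card e = 2"
  using G unfolding wf_graph_def by auto

lemma finite_E: "finite E"
  using finite_edges[OF G] by simp

lemma set_edge_list: "e \<in> E \<Longrightarrow> set (edge_list e) = e"
  by (rule edge_list[of e]) (use edge_card in auto)

lemma edge_list_in_tuples: "e \<in> E \<Longrightarrow> edge_list e \<in> tuples V 2"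
  by (rule edge_list[of e]) (use edge_card in \<open>auto simp: tuples_def\<close>)

lemma interp_graph_struct_edge_list: "e \<in> E \<Longrightarrow> interp (graph_struct V E w idx) 0 (edge_list e) = w e"
proof -
  assume e: "e \<in> E"
  have "(\<Sum>e'\<in>E. if edge_list e = edge_list e' then w e' else 0) = (\<Sum>e'\<in>E. if e' = e then w e' else 0)"
    using e by (intro sum.cong refl) (metis set_edge_list)
  then show ?thesis using e finite_E by (simp add: graph_struct_def)
qed

lemma interp_graph_struct_vertex:
  assumes "x \<in> V" "y \<in> V"
  shows "interp (graph_struct V E w idx) (Suc (idx x)) [y] = (if y = x then weighted_degree E w x else 0)"
proof -
  have "interp (graph_struct V E w idx) (Suc (idx x)) [y]
      = (\<Sum>x'\<in>V. if idx x = idx x' \<and> y = x' then weighted_degree E w x' else 0)"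
    unfolding graph_struct_def by simp
  also have "\<dots> = (\<Sum>x'\<in>V. if x' = x then (if y = x then weighted_degree E w x else 0) else 0)"
    using idx assms by (intro sum.cong refl) (auto simp: inj_on_def)
  finally show ?thesis using assms finite_V by simp
qed

lemma weighted_degree_nonneg: "0 \<le> weighted_degree E w x"
  unfolding weighted_degree_def using w by (auto intro!: sum_nonneg simp: less_imp_le)

lemma is_struct_graph_struct: "V \<noteq> {} \<Longrightarrow> is_struct s (graph_struct V E w idx)"
  unfolding is_struct_def graph_struct_def
  using finite_V w weighted_degree_nonneg by (auto intro!: sum_nonneg simp: less_imp_le)

lemma hom_value_graph_struct:
  "hom_value (graph_sig idx V) (graph_struct V E w idx) C h =
    (\<Sum>e\<in>E. of_rat (w e) * of_rat (interp C 0 (map h (edge_list e)))) +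
    (\<Sum>x\<in>V. of_rat (weighted_degree E w x) * of_rat (interp C (Suc (idx x)) [h x]))"
proof -
  let ?A = "graph_struct V E w idx"
  have "(\<Sum>ys\<in>tuples V 2. of_rat (interp ?A 0 ys) * (of_rat (interp C 0 (map h ys)) :: real))
     = (\<Sum>ys\<in>tuples V 2. \<Sum>e\<in>E. if ys = edge_list e then of_rat (w e) * of_rat (interp C 0 (map h ys)) else 0)"
    by (simp add: graph_struct_def of_rat_sum sum_distrib_right if_distrib if_distribR cong: if_cong)
  also have "\<dots> = (\<Sum>e\<in>E. of_rat (w e) * of_rat (interp C 0 (map h (edge_list e))))"
    by (subst sum.swap) (simp add: edge_list_in_tuples finite_V)
  finally have binary: "(\<Sum>ys\<in>tuples V 2. of_rat (interp ?A 0 ys) * (of_rat (interp C 0 (map h ys)) :: real))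
     = (\<Sum>e\<in>E. of_rat (w e) * of_rat (interp C 0 (map h (edge_list e))))" .
  have unary: "(\<Sum>y\<in>V. of_rat (interp ?A (Suc (idx x)) [y]) * (of_rat (interp C (Suc (idx x)) [h y]) :: real))
     = of_rat (weighted_degree E w x) * of_rat (interp C (Suc (idx x)) [h x])" if x: "x \<in> V" for x
    using x finite_V by (simp add: interp_graph_struct_vertex if_distrib if_distribR cong: if_cong)
  show ?thesis
    unfolding hom_value_graph_sig[OF idx finite_V] dom_graph_struct binary
    by (simp add: unary)
qed

lemma sum_weighted_degree_indicator:
  "(\<Sum>x\<in>V. of_rat (weighted_degree E w x) * (if x \<in> X then 1 else 0))
     = (\<Sum>e\<in>E. of_rat (w e) * real (card (e \<inter> X)))"
proof -
  have "(\<Sum>x\<in>V. of_rat (weighted_degree E w x) * (if x \<in> X then 1 else 0))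
      = (\<Sum>e\<in>E. \<Sum>x\<in>V. if x \<in> e \<and> x \<in> X then (of_rat (w e)::real) else 0)"
    unfolding weighted_degree_def
    by (subst sum.swap) (auto simp: of_rat_sum sum_distrib_right intro!: sum.cong)
  also have "\<dots> = (\<Sum>e\<in>E. of_rat (w e) * real (card (e \<inter> X)))"
  proof (rule sum.cong[OF refl])
    fix e assume "e \<in> E"
    then have "{x\<in>V. x \<in> e \<and> x \<in> X} = e \<inter> X" using edge_card by auto
    then show "(\<Sum>x\<in>V. if x \<in> e \<and> x \<in> X then (of_rat (w e)::real) else 0)
        = of_rat (w e) * real (card (e \<inter> X))"
      using sum.inter_filter[OF finite_V, of "\<lambda>_. (of_rat (w e)::real)" "\<lambda>x. x \<in> e \<and> x \<in> X"]
      by (simp add: mult.commute)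
  qed
  finally show ?thesis .
qed

lemma sum_weighted_degree: "(\<Sum>x\<in>V. (of_rat (weighted_degree E w x) :: real)) = 2 * (\<Sum>e\<in>E. of_rat (w e))"
proof -
  have "(\<Sum>e\<in>E. of_rat (w e) * real (card (e \<inter> V))) = (\<Sum>e\<in>E. 2 * (of_rat (w e) :: real))"
    using edge_card by (intro sum.cong refl) (simp add: Int_absorb2)
  then show ?thesis
    using sum_weighted_degree_indicator[of V] by (simp add: sum_distrib_left)
qed

lemma sum_weight_touching_le:
  "(\<Sum>e\<in>E. of_rat (w e) * (if e \<inter> X \<noteq> {} then 1 else 0))
     \<le> (\<Sum>x\<in>V. (of_rat (weighted_degree E w x)::real) * (if x \<in> X then 1 else 0))"
  unfolding sum_weighted_degree_indicator
proof (rule sum_mono)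
  fix e assume e: "e \<in> E"
  have "finite e" using edge_card[OF e] finite_V finite_subset by blast
  then have "e \<inter> X \<noteq> {} \<Longrightarrow> 1 \<le> card (e \<inter> X)" by (simp add: Suc_le_eq card_gt_0_iff)
  then show "of_rat (w e) * (if e \<inter> X \<noteq> {} then 1 else 0) \<le> (of_rat (w e)::real) * real (card (e \<inter> X))"
    using w[OF e] by (auto intro!: mult_left_mono)
qed

lemma gaifman_graph_struct: "gaifman (graph_sig idx V) (graph_struct V E w idx) = (V, E)"
proof -
  let ?s = "graph_sig idx V" and ?A = "graph_struct V E w idx"
  have "e \<in> E" if e_gaif: "e \<in> edges (gaifman ?s ?A)" for e
  proof -
    obtain u v f xs where e: "e = {u, v}" "u \<noteq> v" "f \<in> sig_syms ?s"
      "xs \<in> tuples V (sig_ar ?s f)" "interp ?A f xs > 0" "u \<in> set xs" "v \<in> set xs"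
      using e_gaif unfolding edges_gaifman dom_graph_struct by blast
    show "e \<in> E"
    proof (cases "f = 0")
      case True
      then have "(\<Sum>e\<in>E. if xs = edge_list e then w e else 0) \<noteq> 0"
        using e(5) by (simp add: graph_struct_def)
      then obtain e' where e': "e' \<in> E" "(if xs = edge_list e' then w e' else 0) \<noteq> 0"
        by (rule sum.not_neutral_contains_not_neutral)
      then have "u \<in> e'" "v \<in> e'" using e(6,7) set_edge_list[OF e'(1)] by (auto split: if_splits)
      moreover obtain a b where "e' = {a, b}"
        using edge_card[OF e'(1)] card_2_iff[of e'] by blast
      ultimately have "e' = {u, v}" using e(2) by auto
      then show ?thesis using e(1) e'(1) by simp
    next
      case False
      then obtain y where "xs = [y]" using e(4) by (auto simp: sig_ar_graph_sig tuples_Suc_0)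
      then show ?thesis using e by auto
    qed
  qed
  moreover have "e \<in> edges (gaifman ?s ?A)" if e: "e \<in> E" for e
  proof (rule edge_list[of e])
    show "card e = 2" using edge_card e by auto
    fix a b assume ab: "edge_list e = [a, b]" "e = {a, b}" "a \<noteq> b"
    have "interp ?A 0 (edge_list e) > 0" using interp_graph_struct_edge_list[OF e] w[OF e] by simp
    moreover have "edge_list e \<in> tuples (dom ?A) (sig_ar ?s 0)"
      using edge_list_in_tuples[OF e] by (simp add: sig_ar_graph_sig)
    ultimately show "e \<in> edges (gaifman ?s ?A)"
      using gaifman_edgeI[of 0 ?s "edge_list e" ?A a b] ab by (simp add: sig_syms_graph_sig)
  qed
  ultimately have "edges (gaifman ?s ?A) = E" by blast
  then show ?thesis using graph_eq_pair[of "gaifman ?s ?A"] by simp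
qed

lemma opt_edge_test_ge:
  assumes "V \<noteq> {}"
  shows "(\<Sum>e\<in>E. of_rat (w e)) \<le> opt (graph_sig idx V) (graph_struct V E w idx) (edge_test V E)"
proof -
  have "hom_value (graph_sig idx V) (graph_struct V E w idx) (edge_test V E) id = (\<Sum>e\<in>E. of_rat (w e))"
    unfolding hom_value_graph_struct by (simp add: edge_test_def set_edge_list cong: sum.cong)
  then show ?thesis
    using hom_value_le_opt[of "graph_struct V E w idx" "edge_test V E" id "graph_sig idx V"] finite_V
    by (simp add: edge_test_def)
qed

lemma opt_vertex_test_ge:
  assumes "V \<noteq> {}"
  shows "2 * (\<Sum>e\<in>E. of_rat (w e)) \<le> opt (graph_sig idx V) (graph_struct V E w idx) (vertex_test V idx)"
proof -
  have "hom_value (graph_sig idx V) (graph_struct V E w idx) (vertex_test V idx) id = 2 * (\<Sum>e\<in>E. of_rat (w e))"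
    unfolding hom_value_graph_struct sum_weighted_degree[symmetric] by (simp add: vertex_test_def)
  then show ?thesis
    using hom_value_le_opt[of "graph_struct V E w idx" "vertex_test V idx" id "graph_sig idx V"] finite_V
    by (simp add: vertex_test_def)
qed

lemma decoding_test_edge_in_gaifman:
  assumes e: "e \<in> E" and h: "h ` V \<subseteq> dom B"
    and pos: "interp (decoding_test B idx g) 0 (map h (edge_list e)) \<noteq> 0"
  shows "h ` e \<in> edges (gaifman (graph_sig idx V) B)"
proof (rule edge_list[of e])
  show "card e = 2" using edge_card[OF e] by simp
  fix a b assume ab: "edge_list e = [a, b]" "e = {a, b}" "a \<noteq> b"
  have "interp B 0 [h a, h b] > 0" "h a \<noteq> h b"
    using pos ab by (auto simp: decoding_test_def split: if_splits)
  moreover have "[h a, h b] \<in> tuples (dom B) (sig_ar (graph_sig idx V) 0)"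
    using h edge_card[OF e] ab by (auto simp: tuples_def sig_ar_graph_sig)
  ultimately show "h ` e \<in> edges (gaifman (graph_sig idx V) B)"
    using gaifman_edgeI[of 0 "graph_sig idx V" "[h a, h b]" B "h a" "h b"] ab
    by (simp add: sig_syms_graph_sig)
qed

lemma broken_edges_weight_le:
  assumes h: "h ` V \<subseteq> dom B" and g: "g ` dom B \<subseteq> V" and wsum: "(\<Sum>e\<in>E. of_rat (w e) :: real) = 1"
  shows "(\<Sum>e\<in>broken_edges E (unfaithful V g h) (gaifman (graph_sig idx V) B) h. of_rat (w e))
     \<le> 3 - hom_value (graph_sig idx V) (graph_struct V E w idx) (decoding_test B idx g) h"
proof -
  let ?X = "unfaithful V g h" and ?F = "broken_edges E (unfaithful V g h) (gaifman (graph_sig idx V) B) h"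
  define c where "c e = (of_rat (interp (decoding_test B idx g) 0 (map h (edge_list e))) :: real)" for e
  define touch where "touch e = (if e \<inter> ?X \<noteq> {} then 1 else 0 :: real)" for e
  have c01: "c e = 0 \<or> c e = 1" for e unfolding c_def decoding_test_def by auto
  have unary: "of_rat (interp (decoding_test B idx g) (Suc (idx x)) [h x]) = (if x \<in> ?X then 0 else 1 :: real)"
    if x: "x \<in> V" for x
  proof -
    have "g (h x) \<in> V" using x h g by auto
    then show ?thesis using x h idx by (auto simp: decoding_test_def unfaithful_def inj_on_def)
  qed
  have "?F \<subseteq> E" unfolding broken_edges_def by auto
  then have "(\<Sum>e\<in>?F. of_rat (w e)) = (\<Sum>e\<in>E. if e \<in> ?F then of_rat (w e) else 0 :: real)"
    using sum.inter_restrict[OF finite_E, of "\<lambda>e. (of_rat (w e)::real)" ?F]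
    by (simp add: Int_absorb1)
  also have "\<dots> \<le> (\<Sum>e\<in>E. of_rat (w e) * ((1 - c e) + touch e))"
  proof (rule sum_mono)
    fix e assume e: "e \<in> E"
    have "e \<in> ?F \<Longrightarrow> 1 \<le> (1 - c e) + touch e"
      using c01[of e] decoding_test_edge_in_gaifman[OF e h, of g]
      by (auto simp: c_def touch_def broken_edges_def)
    moreover have "0 \<le> (1 - c e) + touch e" using c01[of e] by (auto simp: touch_def)
    ultimately show "(if e \<in> ?F then of_rat (w e) else 0) \<le> of_rat (w e) * ((1 - c e) + touch e)"
      using w[OF e] mult_left_mono[of 1 "(1 - c e) + touch e" "of_rat (w e)"] by auto
  qed
  also have "\<dots> = 1 - (\<Sum>e\<in>E. of_rat (w e) * c e) + (\<Sum>e\<in>E. of_rat (w e) * touch e)"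
    using wsum by (simp add: algebra_simps sum.distrib sum_subtractf)
  also have "(\<Sum>e\<in>E. of_rat (w e) * touch e)
      \<le> (\<Sum>x\<in>V. of_rat (weighted_degree E w x) * (if x \<in> ?X then 1 else 0))"
    unfolding touch_def by (rule sum_weight_touching_le)
  also have "\<dots> = 2 - (\<Sum>x\<in>V. of_rat (weighted_degree E w x) * (if x \<in> ?X then 0 else 1))"
  proof -
    have "(\<Sum>x\<in>V. of_rat (weighted_degree E w x) * (if x \<in> ?X then 1 else 0))
        + (\<Sum>x\<in>V. of_rat (weighted_degree E w x) * (if x \<in> ?X then 0 else 1))
        = (\<Sum>x\<in>V. (of_rat (weighted_degree E w x) :: real))"
      unfolding sum.distrib[symmetric] by (intro sum.cong) auto
    then show ?thesis using sum_weighted_degree wsum by linarith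
  qed
  finally show ?thesis
    unfolding hom_value_graph_struct c_def by (simp add: unary)
qed

lemma nonempty_verts: "E \<noteq> {} \<Longrightarrow> V \<noteq> {}"
  using edge_card by fastforce

lemma opt_decoding_test_ge:
  assumes wsum: "(\<Sum>e\<in>E. of_rat (w e) :: real) = 1"
    and B: "is_struct (graph_sig idx V) B"
    and close: "d_opt (graph_sig idx V) (graph_struct V E w idx) B \<le> ereal \<epsilon>"
  obtains g where "g ` dom B \<subseteq> V" "exp (-\<epsilon>) * 3 \<le> opt (graph_sig idx V) B (decoding_test B idx g)"
proof -
  let ?s = "graph_sig idx V" and ?A = "graph_struct V E w idx"
  have "E \<noteq> {}" using wsum by auto
  then have V: "V \<noteq> {}" by (rule nonempty_verts)
  have finB: "finite (dom B)" using B unfolding is_struct_def by auto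
  obtain g1 where g1: "g1 \<in> dom B \<rightarrow>\<^sub>E V" "opt ?s B (edge_test V E) = hom_value ?s B (edge_test V E) g1"
    by (rule opt_attained[of B "edge_test V E"]) (use finB finite_V V in \<open>auto simp: edge_test_def\<close>)
  obtain g where g: "g \<in> dom B \<rightarrow>\<^sub>E V" "opt ?s B (vertex_test V idx) = hom_value ?s B (vertex_test V idx) g"
    by (rule opt_attained[of B "vertex_test V idx"]) (use finB finite_V V in \<open>auto simp: vertex_test_def\<close>)
  have C1: "is_struct ?s (edge_test V E)" and C2: "is_struct ?s (vertex_test V idx)"
    using finite_V V by (auto simp: is_struct_def edge_test_def vertex_test_def)
  have g_maps: "g1 ` dom B \<subseteq> V" "g ` dom B \<subseteq> V" using g1(1) g(1) by auto
  have "exp (-\<epsilon>) * 1 \<le> opt ?s B (edge_test V E)"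
    by (rule d_opt_le_imp_opt_ge[OF close B C1]) (use opt_edge_test_ge[OF V] wsum in simp_all)
  moreover have "exp (-\<epsilon>) * 2 \<le> opt ?s B (vertex_test V idx)"
    by (rule d_opt_le_imp_opt_ge[OF close B C2]) (use opt_vertex_test_ge[OF V] wsum in simp_all)
  moreover have "hom_value ?s B (edge_test V E) g1 + hom_value ?s B (vertex_test V idx) g
      \<le> hom_value ?s B (decoding_test B idx g) id"
    by (rule hom_value_decoding_test_ge[OF idx finite_V B g_maps]) (use edge_card in blast)
  moreover have "\<dots> \<le> opt ?s B (decoding_test B idx g)"
    by (rule hom_value_le_opt) (use finB in \<open>auto simp: decoding_test_def\<close>)
  ultimately have "exp (-\<epsilon>) * 3 \<le> opt ?s B (decoding_test B idx g)" using g1(2) g(2) by linarith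
  then show ?thesis using that g_maps(2) by blast
qed

lemma decoding_maps:
  assumes wsum: "(\<Sum>e\<in>E. of_rat (w e) :: real) = 1"
    and B: "is_struct (graph_sig idx V) B"
    and close: "d_opt (graph_sig idx V) (graph_struct V E w idx) B \<le> ereal \<epsilon>"
  obtains g h where "g ` dom B \<subseteq> V" "h ` V \<subseteq> dom B"
    "3 * exp (-2 * \<epsilon>) \<le> hom_value (graph_sig idx V) (graph_struct V E w idx) (decoding_test B idx g) h"
proof -
  let ?s = "graph_sig idx V" and ?A = "graph_struct V E w idx"
  obtain g where g: "g ` dom B \<subseteq> V" and B_C3: "exp (-\<epsilon>) * 3 \<le> opt ?s B (decoding_test B idx g)"
    using opt_decoding_test_ge[OF wsum B close] .
  have finB: "finite (dom B)" and neB: "dom B \<noteq> {}" using B unfolding is_struct_def by auto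
  have "E \<noteq> {}" using wsum by auto
  then have A: "is_struct ?s ?A" by (intro is_struct_graph_struct nonempty_verts)
  have C3: "is_struct ?s (decoding_test B idx g)"
    using finB neB unfolding is_struct_def decoding_test_def by auto
  have close': "d_opt ?s B ?A \<le> ereal \<epsilon>" using close d_opt_commute[of ?s ?A B] by simp
  obtain h where h: "h \<in> V \<rightarrow>\<^sub>E dom B" "opt ?s ?A (decoding_test B idx g) = hom_value ?s ?A (decoding_test B idx g) h"
    by (rule opt_attained[of ?A "decoding_test B idx g"])
       (use finB neB finite_V in \<open>auto simp: decoding_test_def\<close>)
  have "exp (-\<epsilon>) * (exp (-\<epsilon>) * 3) \<le> opt ?s ?A (decoding_test B idx g)"
    by (rule d_opt_le_imp_opt_ge[OF close' A C3 _ B_C3]) simp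
  moreover have "exp (-\<epsilon>) * (exp (-\<epsilon>) * 3) = 3 * exp (-2 * \<epsilon>)"
    by (simp add: algebra_simps flip: exp_add)
  moreover have "h ` V \<subseteq> dom B" using h(1) by auto
  ultimately show ?thesis using that g h(2) by simp
qed

lemma light_deletion_set:
  assumes gp: "graph_parameter p" and mo: "monotone_param p" and mu: "max_on_disjoint_union p"
    and wsum: "(\<Sum>e\<in>E. of_rat (w e) :: real) = 1"
    and B: "is_struct (graph_sig idx V) B"
    and close: "d_opt (graph_sig idx V) (graph_struct V E w idx) B \<le> ereal \<epsilon>"
  shows "\<exists>F\<subseteq>E. p (delete_edges (V, E) F) \<le> p (gaifman (graph_sig idx V) B) \<and>
           (\<Sum>e\<in>F. of_rat (w e)) \<le> 3 * (1 - exp (-2 * \<epsilon>))"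
proof -
  let ?s = "graph_sig idx V" and ?A = "graph_struct V E w idx"
  obtain g h where g_maps: "g ` dom B \<subseteq> V" and h_maps: "h ` V \<subseteq> dom B"
    and A_C3_h: "3 * exp (-2 * \<epsilon>) \<le> hom_value ?s ?A (decoding_test B idx g) h"
    using decoding_maps[OF wsum B close] .
  have neB: "dom B \<noteq> {}" using B unfolding is_struct_def by auto
  define X where "X = unfaithful V g h"
  define F where "F = broken_edges E X (gaifman ?s B) h"
  have "(\<Sum>e\<in>F. of_rat (w e)) \<le> 3 - hom_value ?s ?A (decoding_test B idx g) h"
    unfolding F_def X_def by (rule broken_edges_weight_le[OF h_maps g_maps wsum])
  then have weight: "(\<Sum>e\<in>F. of_rat (w e)) \<le> 3 * (1 - exp (-2 * \<epsilon>))"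
    using A_C3_h by simp
  have "inj_on h (V - X)"
    unfolding X_def unfaithful_def by (rule inj_on_inverseI[of _ g]) simp
  moreover have "X \<subseteq> V" unfolding X_def unfaithful_def by auto
  moreover have "e \<inter> X = {} \<and> h ` e \<in> edges (gaifman ?s B)" if "e \<in> E - F" for e
    using that unfolding F_def broken_edges_def by auto
  ultimately have "p (delete_edges (V, E) F) \<le> p (gaifman ?s B)"
    using param_delete_edges_le[OF gp mo mu G wf_graph_gaifman[OF B], of X h F] neB h_maps
    by simp
  moreover have "F \<subseteq> E" unfolding F_def broken_edges_def by auto
  ultimately show ?thesis using weight by blast
qed

end

lemma graph_struct_in_struct_class:
  assumes "wf_graph (V, E)" "(V, E) \<in> \<G>" "V \<noteq> {}" "inj_on idx V" "\<And>e. e \<in> E \<Longrightarrow> w e > 0" "2 \<le> r"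
  shows "(graph_sig idx V, graph_struct V E w idx) \<in> struct_class \<G> r"
proof -
  have "finite V" using assms(1) unfolding wf_graph_def by simp
  then show ?thesis
    using assms is_struct_graph_struct[where w = w, OF assms(1,4,5,3)]
      gaifman_graph_struct[where w = w, OF assms(1,4,5)]
    unfolding struct_class_def is_sig_def by (auto simp: sig_syms_graph_sig sig_ar_graph_sig)
qed

lemma close_graph_struct:
  assumes G: "wf_graph (V, E)" "(V, E) \<in> \<G>" "V \<noteq> {}" and idx: "inj_on idx V"
    and w: "\<And>e. e \<in> E \<Longrightarrow> w e > 0" and r: "2 \<le> r"
    and close: "\<forall>(s, A)\<in>struct_class \<G> r. \<exists>B. is_struct s B \<and> p (gaifman s B) \<le> k \<and> d_opt s A B \<le> ereal \<epsilon>"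
  obtains B where "is_struct (graph_sig idx V) B" "p (gaifman (graph_sig idx V) B) \<le> k"
    "d_opt (graph_sig idx V) (graph_struct V E w idx) B \<le> ereal \<epsilon>"
proof -
  have "(graph_sig idx V, graph_struct V E w idx) \<in> struct_class \<G> r"
    by (rule graph_struct_in_struct_class[where w = w, OF G idx w r])
  from bspec[OF close this] show ?thesis using that by (auto simp only: case_prod_conv)
qed

lemma fragile_distribution_of_close_graph_structs:
  fixes idx :: "'v \<Rightarrow> nat"
  assumes gp: "graph_parameter p" and mo: "monotone_param p" and mu: "max_on_disjoint_union p"
    and G: "wf_graph (V, E)" "(V, E) \<in> \<G>" "V \<noteq> {}" and idx: "inj_on idx V"
    and r: "2 \<le> r" and \<epsilon>: "\<epsilon> > 0"
    and close: "\<forall>(s, A)\<in>struct_class \<G> r. \<exists>B. is_struct s B \<and> p (gaifman s B) \<le> k \<and> d_opt s A B \<le> ereal \<epsilon>"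
  shows "\<exists>\<pi>. (\<forall>F\<in>set_pmf \<pi>. F \<subseteq> E \<and> p (delete_edges (V, E) F) \<le> k) \<and>
             (\<forall>e\<in>E. measure_pmf.prob \<pi> {F. e \<in> F} \<le> 4 * (3 * (1 - exp (-2 * \<epsilon>))))"
proof (cases "E = {}")
  case True
  obtain B where B: "is_struct (graph_sig idx V) B" "p (gaifman (graph_sig idx V) B) \<le> k"
    by (rule close_graph_struct[where w = "\<lambda>_. 1", OF G idx _ r close]) simp
  have "p (V, {}) \<le> p (gaifman (graph_sig idx V) B)"
    by (rule param_edgeless_le[OF gp mo mu _ wf_graph_gaifman[OF B(1)]])
       (use G(1) B(1) in \<open>auto simp: wf_graph_def is_struct_def\<close>)
  then show ?thesis
    using B(2) True by (intro exI[of _ "return_pmf {}"]) (simp add: delete_edges_def)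
next
  case False
  show ?thesis
  proof (rule multiplicative_weights[OF finite_edges[OF G(1), simplified] False])
    show "0 < 3 * (1 - exp (-2 * \<epsilon>))" using \<epsilon> by simp
    fix w :: "'v set \<Rightarrow> rat"
    assume w: "\<And>e. e \<in> E \<Longrightarrow> w e > 0" and wsum: "(\<Sum>e\<in>E. (of_rat (w e)::real)) = 1"
    obtain B where B: "is_struct (graph_sig idx V) B" "p (gaifman (graph_sig idx V) B) \<le> k"
        "d_opt (graph_sig idx V) (graph_struct V E w idx) B \<le> ereal \<epsilon>"
      by (rule close_graph_struct[where w = w, OF G idx w r close])
    show "\<exists>F\<subseteq>E. p (delete_edges (V, E) F) \<le> k \<and> (\<Sum>e\<in>F. of_rat (w e)) \<le> 3 * (1 - exp (-2 * \<epsilon>))"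
      using light_deletion_set[where w = w, OF G(1) idx w gp mo mu wsum B(1,3)] B(2)
      by (meson order.trans)
  qed
qed

lemma fragile_distribution_of_close_structs:
  assumes gp: "graph_parameter p" and mo: "monotone_param p" and mu: "max_on_disjoint_union p"
    and G: "wf_graph G" "G \<in> \<G>" and r: "2 \<le> r" and \<epsilon>: "\<epsilon> > 0"
    and close: "\<forall>(s, A)\<in>struct_class \<G> r. \<exists>B. is_struct s B \<and> p (gaifman s B) \<le> k \<and> d_opt s A B \<le> ereal \<epsilon>"
  shows "\<exists>\<pi>. (\<forall>F\<in>set_pmf \<pi>. F \<subseteq> edges G \<and> p (delete_edges G F) \<le> max k (p ({}, {}))) \<and>
             (\<forall>e\<in>edges G. measure_pmf.prob \<pi> {F. e \<in> F} \<le> 12 * (1 - exp (-2 * \<epsilon>)))"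
proof -
  define V E where "V = verts G" and "E = edges G"
  have G_eq: "G = (V, E)" unfolding V_def E_def by (rule graph_eq_pair)
  have wf: "wf_graph (V, E)" and GG: "(V, E) \<in> \<G>" using G G_eq by simp_all
  show ?thesis
  proof (cases "V = {}")
    case True
    then have "E = {}" using wf unfolding wf_graph_def by fastforce
    then show ?thesis
      using G_eq True by (intro exI[of _ "return_pmf {}"]) (simp add: delete_edges_def)
  next
    case False
    obtain idx :: "'a \<Rightarrow> nat" where idx: "inj_on idx V"
      using finite_imp_inj_to_nat_seg[of V] wf unfolding wf_graph_def by auto
    obtain \<pi> where "\<forall>F\<in>set_pmf \<pi>. F \<subseteq> E \<and> p (delete_edges (V, E) F) \<le> k"
      "\<forall>e\<in>E. measure_pmf.prob \<pi> {F. e \<in> F} \<le> 4 * (3 * (1 - exp (-2 * \<epsilon>)))"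
      using fragile_distribution_of_close_graph_structs[OF gp mo mu wf GG False idx r \<epsilon> close] by blast
    then show ?thesis unfolding G_eq by (intro exI[of _ \<pi>]) auto
  qed
qed

lemma pliable_imp_frac_edge_fragile:
  assumes gp: "graph_parameter p" and mo: "monotone_param p" and mu: "max_on_disjoint_union p"
    and wf: "\<forall>G\<in>\<G>. wf_graph G" and r: "2 \<le> r" and pl: "pliable p (struct_class \<G> r)"
  shows "frac_edge_fragile p \<G>"
  unfolding frac_edge_fragile_def
proof (intro allI impI)
  fix \<epsilon> :: real assume \<epsilon>: "\<epsilon> > 0"
  obtain k where k: "\<forall>(s, A)\<in>struct_class \<G> r. \<exists>B. is_struct s B \<and> p (gaifman s B) \<le> k \<and>
      d_opt s A B \<le> ereal (\<epsilon> / 24)"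
    using pl \<epsilon> unfolding pliable_def by (meson divide_pos_pos zero_less_numeral)
  have bound: "12 * (1 - exp (-2 * (\<epsilon> / 24))) \<le> \<epsilon>"
    using exp_ge_add_one_self[of "-2 * (\<epsilon> / 24)"] by simp
  show "\<exists>k. \<forall>G\<in>\<G>. \<exists>\<pi>. (\<forall>F\<in>set_pmf \<pi>. F \<subseteq> edges G \<and> p (delete_edges G F) \<le> k) \<and>
      (\<forall>e\<in>edges G. measure_pmf.prob \<pi> {F. e \<in> F} \<le> \<epsilon>)"
  proof (intro exI[of _ "max k (p ({}, {}))"] ballI)
    fix G assume G: "G \<in> \<G>"
    obtain \<pi> where \<pi>: "\<forall>F\<in>set_pmf \<pi>. F \<subseteq> edges G \<and> p (delete_edges G F) \<le> max k (p ({}, {}))"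
        "\<forall>e\<in>edges G. measure_pmf.prob \<pi> {F. e \<in> F} \<le> 12 * (1 - exp (-2 * (\<epsilon> / 24)))"
      using fragile_distribution_of_close_structs[OF gp mo mu _ G r _ k] wf G \<epsilon> by auto
    then show "\<exists>\<pi>. (\<forall>F\<in>set_pmf \<pi>. F \<subseteq> edges G \<and> p (delete_edges G F) \<le> max k (p ({}, {}))) \<and>
        (\<forall>e\<in>edges G. measure_pmf.prob \<pi> {F. e \<in> F} \<le> \<epsilon>)"
      using bound by (intro exI[of _ \<pi>]) force
  qed
qed

section \<open>Fractional fragility implies pliability\<close>

definition struct_without :: "'v set set \<Rightarrow> 'v struct \<Rightarrow> 'v struct" where
  "struct_without F A = (dom A, \<lambda>f xs. if \<exists>e\<in>F. e \<subseteq> set xs then 0 else interp A f xs)"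

lemma dom_struct_without [simp]: "dom (struct_without F A) = dom A"
  unfolding struct_without_def by simp

lemma is_struct_struct_without: "is_struct s A \<Longrightarrow> is_struct s (struct_without F A)"
  unfolding is_struct_def struct_without_def by auto

lemma hom_value_struct_without_le:
  assumes "is_struct s A" "is_struct s C" "h ` dom A \<subseteq> dom C"
  shows "hom_value s (struct_without F A) C h \<le> hom_value s A C h"
  by (rule hom_value_mono_interp) (use assms in \<open>auto simp: struct_without_def is_struct_def\<close>)

lemma sum_hom_value_struct_without:
  "(\<Sum>F\<in>FF. of_rat (q F) * hom_value s (struct_without F A) C h) =
   (\<Sum>f\<in>sig_syms s. \<Sum>xs\<in>tuples (dom A) (sig_ar s f).
      of_rat (interp A f xs) * of_rat (interp C f (map h xs)) *
      (\<Sum>F\<in>FF. if \<exists>e\<in>F. e \<subseteq> set xs then 0 else of_rat (q F)))"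
proof -
  have "(\<Sum>F\<in>FF. of_rat (q F) * hom_value s (struct_without F A) C h)
      = (\<Sum>F\<in>FF. \<Sum>f\<in>sig_syms s. \<Sum>xs\<in>tuples (dom A) (sig_ar s f).
          of_rat (interp A f xs) * of_rat (interp C f (map h xs)) *
          (if \<exists>e\<in>F. e \<subseteq> set xs then 0 else (of_rat (q F)::real)))"
    unfolding hom_value_def struct_without_def sum_distrib_left
    by (intro sum.cong refl) (auto simp: algebra_simps)
  also have "\<dots> = (\<Sum>f\<in>sig_syms s. \<Sum>xs\<in>tuples (dom A) (sig_ar s f). \<Sum>F\<in>FF.
          of_rat (interp A f xs) * of_rat (interp C f (map h xs)) *
          (if \<exists>e\<in>F. e \<subseteq> set xs then 0 else (of_rat (q F)::real)))"
    by (subst sum.swap) (intro sum.cong refl, rule sum.swap)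
  finally show ?thesis by (simp add: sum_distrib_left)
qed

lemma gaifman_struct_without_subgraph:
  assumes "is_struct s A"
  shows "subgraph (gaifman s (struct_without F A)) (delete_edges (gaifman s A) F)"
proof -
  have "e \<in> edges (gaifman s A) - F" if e_gaif: "e \<in> edges (gaifman s (struct_without F A))" for e
  proof -
    obtain u v f xs where e: "e = {u, v}" "u \<noteq> v" "f \<in> sig_syms s" "xs \<in> tuples (dom A) (sig_ar s f)"
        "interp (struct_without F A) f xs > 0" "u \<in> set xs" "v \<in> set xs"
      using e_gaif unfolding edges_gaifman dom_struct_without by blast
    then have "\<not> (\<exists>e\<in>F. e \<subseteq> set xs)" "interp A f xs > 0"
      by (auto simp: struct_without_def split: if_splits)
    then show ?thesis using e gaifman_edgeI[OF e(3,4)] by auto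
  qed
  then show ?thesis
    using wf_graph_gaifman[OF is_struct_struct_without[OF assms]]
    unfolding subgraph_def delete_edges_def by auto
qed

lemma param_gaifman_struct_without_le:
  assumes "monotone_param p" "is_struct s A"
  shows "p (gaifman s (struct_without F A)) \<le> p (delete_edges (gaifman s A) F)"
proof (rule monotone_paramD[OF assms(1) _ gaifman_struct_without_subgraph[OF assms(2)]])
  show "wf_graph (delete_edges (gaifman s A) F)"
    using wf_graph_gaifman[OF assms(2)] unfolding wf_graph_def delete_edges_def by auto
qed

definition disjoint_copies :: "'i set \<Rightarrow> 'v set \<Rightarrow> ('i \<times> 'v \<Rightarrow> 'v) \<Rightarrow> ('i \<Rightarrow> rat) \<Rightarrow> ('i \<Rightarrow> 'v struct) \<Rightarrow> 'v struct" where
  "disjoint_copies I D emb q S = (emb ` (I \<times> D), \<lambda>f ys. \<Sum>i\<in>I.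
     if set ys \<subseteq> emb ` ({i} \<times> D) then q i * interp (S i) f (map (\<lambda>y. snd (inv_into (I \<times> D) emb y)) ys)
     else 0)"

context
  fixes I :: "'i set" and D :: "'v set" and emb :: "'i \<times> 'v \<Rightarrow> 'v" and q :: "'i \<Rightarrow> rat"
    and S :: "'i \<Rightarrow> 'v struct"
  assumes fin: "finite I" "finite D" and emb: "inj_on emb (I \<times> D)"
    and dom_S: "\<And>i. i \<in> I \<Longrightarrow> dom (S i) = D"
begin

lemma dom_disjoint_copies: "dom (disjoint_copies I D emb q S) = emb ` (I \<times> D)"
  unfolding disjoint_copies_def by simp

lemma inj_on_copy: "i \<in> I \<Longrightarrow> inj_on (\<lambda>x. emb (i, x)) D"
  using emb unfolding inj_on_def by auto

lemma decode_copy: "i \<in> I \<Longrightarrow> x \<in> D \<Longrightarrow> snd (inv_into (I \<times> D) emb (emb (i, x))) = x"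
  using emb by (simp add: inv_into_f_f)

lemma copy_tuples: "i \<in> I \<Longrightarrow> {ys \<in> tuples (emb ` (I \<times> D)) n. set ys \<subseteq> emb ` ({i} \<times> D)}
    = map (\<lambda>x. emb (i, x)) ` tuples D n"
proof -
  assume i: "i \<in> I"
  have "emb ` ({i} \<times> D) = (\<lambda>x. emb (i, x)) ` D" by auto
  then have "{ys \<in> tuples (emb ` (I \<times> D)) n. set ys \<subseteq> emb ` ({i} \<times> D)} = tuples ((\<lambda>x. emb (i, x)) ` D) n"
    using i unfolding tuples_def by auto
  then show ?thesis using tuples_image[OF inj_on_copy[OF i]] by simp
qed

lemma hom_value_disjoint_copies:
  "hom_value s (disjoint_copies I D emb q S) C h = (\<Sum>i\<in>I. of_rat (q i) * hom_value s (S i) C (\<lambda>x. h (emb (i, x))))"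
proof -
  let ?dec = "\<lambda>y. snd (inv_into (I \<times> D) emb y)"
  let ?t = "\<lambda>f i ys. of_rat (q i) * of_rat (interp (S i) f (map ?dec ys)) * (of_rat (interp C f (map h ys)) :: real)"
  have copy: "(\<Sum>ys\<in>tuples (emb ` (I \<times> D)) n. if set ys \<subseteq> emb ` ({i} \<times> D) then ?t f i ys else 0)
      = of_rat (q i) * (\<Sum>xs\<in>tuples D n. of_rat (interp (S i) f xs) * of_rat (interp C f (map (\<lambda>x. h (emb (i, x))) xs)))"
    if i: "i \<in> I" for f i n
  proof -
    have dec: "map (\<lambda>x. ?dec (emb (i, x))) xs = xs" if "xs \<in> tuples D n" for xs
      using that decode_copy[OF i] unfolding tuples_def by (auto intro!: map_idI)
    have "(\<Sum>ys\<in>tuples (emb ` (I \<times> D)) n. if set ys \<subseteq> emb ` ({i} \<times> D) then ?t f i ys else 0)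
        = (\<Sum>ys\<in>map (\<lambda>x. emb (i, x)) ` tuples D n. ?t f i ys)"
      using fin by (simp add: sum.inter_filter[symmetric] copy_tuples[OF i])
    also have "\<dots> = (\<Sum>xs\<in>tuples D n. ?t f i (map (\<lambda>x. emb (i, x)) xs))"
      by (rule sum.reindex[OF inj_on_map_tuples[OF inj_on_copy[OF i]], unfolded comp_def])
    finally show ?thesis by (simp add: dec comp_def sum_distrib_left mult.assoc cong: sum.cong)
  qed
  have "hom_value s (disjoint_copies I D emb q S) C h
      = (\<Sum>f\<in>sig_syms s. \<Sum>ys\<in>tuples (emb ` (I \<times> D)) (sig_ar s f). \<Sum>i\<in>I.
          if set ys \<subseteq> emb ` ({i} \<times> D) then ?t f i ys else 0)"
    unfolding hom_value_def dom_disjoint_copies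
    by (intro sum.cong refl)
       (simp add: disjoint_copies_def of_rat_sum sum_distrib_right of_rat_mult if_distrib if_distribR
         cong: if_cong)
  also have "\<dots> = (\<Sum>f\<in>sig_syms s. \<Sum>i\<in>I. \<Sum>ys\<in>tuples (emb ` (I \<times> D)) (sig_ar s f).
          if set ys \<subseteq> emb ` ({i} \<times> D) then ?t f i ys else 0)"
    by (intro sum.cong refl) (rule sum.swap)
  also have "\<dots> = (\<Sum>i\<in>I. of_rat (q i) * hom_value s (S i) C (\<lambda>x. h (emb (i, x))))"
    unfolding hom_value_def
    by (subst sum.swap) (simp add: copy dom_S sum_distrib_left cong: sum.cong)
  finally show ?thesis .
qed

lemma is_struct_disjoint_copies:
  assumes "I \<noteq> {}" "D \<noteq> {}" "\<And>i. i \<in> I \<Longrightarrow> is_struct s (S i) \<and> 0 \<le> q i"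
  shows "is_struct s (disjoint_copies I D emb q S)"
  unfolding is_struct_def dom_disjoint_copies
proof (intro conjI ballI)
  show "finite (emb ` (I \<times> D))" "emb ` (I \<times> D) \<noteq> {}" using fin assms(1,2) by auto
  fix f ys assume f: "f \<in> sig_syms s" and ys: "ys \<in> tuples (emb ` (I \<times> D)) (sig_ar s f)"
  have "0 \<le> q i * interp (S i) f (map (\<lambda>y. snd (inv_into (I \<times> D) emb y)) ys)"
    if i: "i \<in> I" and ys_i: "set ys \<subseteq> emb ` ({i} \<times> D)" for i
  proof -
    have "map (\<lambda>y. snd (inv_into (I \<times> D) emb y)) ys \<in> tuples (dom (S i)) (sig_ar s f)"
      using ys ys_i decode_copy[OF i] dom_S[OF i] unfolding tuples_def by auto
    then show ?thesis using assms(3)[OF i] f unfolding is_struct_def by auto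
  qed
  then show "0 \<le> interp (disjoint_copies I D emb q S) f ys"
    unfolding disjoint_copies_def by (auto intro!: sum_nonneg)
qed

lemma edges_gaifman_disjoint_copies:
  assumes S: "\<And>i. i \<in> I \<Longrightarrow> is_struct s (S i)"
    and e: "e \<in> edges (gaifman s (disjoint_copies I D emb q S))"
  shows "\<exists>i\<in>I. e \<in> edges (graph_image (\<lambda>x. emb (i, x)) (gaifman s (S i)))"
proof -
  let ?dec = "\<lambda>y. snd (inv_into (I \<times> D) emb y)"
  obtain u v f ys where e: "e = {u, v}" "u \<noteq> v" "f \<in> sig_syms s"
      "ys \<in> tuples (emb ` (I \<times> D)) (sig_ar s f)" "interp (disjoint_copies I D emb q S) f ys > 0"
      "u \<in> set ys" "v \<in> set ys"
    using e unfolding edges_gaifman dom_disjoint_copies by blast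
  have "(\<Sum>i\<in>I. if set ys \<subseteq> emb ` ({i} \<times> D) then q i * interp (S i) f (map ?dec ys) else 0) \<noteq> 0"
    using e(5) by (simp add: disjoint_copies_def)
  then obtain i where i: "i \<in> I"
      and nz: "(if set ys \<subseteq> emb ` ({i} \<times> D) then q i * interp (S i) f (map ?dec ys) else 0) \<noteq> 0"
    by (rule sum.not_neutral_contains_not_neutral)
  then have ys_i: "set ys \<subseteq> emb ` ({i} \<times> D)" and nz: "interp (S i) f (map ?dec ys) \<noteq> 0"
    by (auto split: if_splits)
  have xs: "map ?dec ys \<in> tuples (dom (S i)) (sig_ar s f)"
    using e(4) ys_i decode_copy[OF i] dom_S[OF i] unfolding tuples_def by auto
  then have "0 \<le> interp (S i) f (map ?dec ys)"
    using S[OF i] e(3) unfolding is_struct_def by blast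
  then have pos: "interp (S i) f (map ?dec ys) > 0" using nz by simp
  obtain u' where u': "u' \<in> D" "u = emb (i, u')" using e(6) ys_i by auto
  obtain v' where v': "v' \<in> D" "v = emb (i, v')" using e(7) ys_i by auto
  have "u' \<in> set (map ?dec ys)"
    unfolding set_map by (rule image_eqI[of u' ?dec u]) (use decode_copy[OF i] u' e(6) in simp_all)
  moreover have "v' \<in> set (map ?dec ys)"
    unfolding set_map by (rule image_eqI[of v' ?dec v]) (use decode_copy[OF i] v' e(7) in simp_all)
  moreover have "u' \<noteq> v'" using e(2) u' v' by auto
  ultimately have "{u', v'} \<in> edges (gaifman s (S i))" by (rule gaifman_edgeI[OF e(3) xs pos])
  moreover have "e = (\<lambda>x. emb (i, x)) ` {u', v'}" using e(1) u' v' by simp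
  ultimately show ?thesis using i unfolding graph_image_def edges_pair by blast
qed

lemma param_gaifman_disjoint_copies_le:
  assumes gp: "graph_parameter p" and mo: "monotone_param p" and mu: "max_on_disjoint_union p"
    and I: "I \<noteq> {}" and D: "D \<noteq> {}" and q: "\<And>i. i \<in> I \<Longrightarrow> 0 \<le> q i"
    and S: "\<And>i. i \<in> I \<Longrightarrow> is_struct s (S i) \<and> p (gaifman s (S i)) \<le> k"
  shows "p (gaifman s (disjoint_copies I D emb q S)) \<le> k"
proof -
  let ?B = "disjoint_copies I D emb q S"
  define H where "H i = graph_image (\<lambda>x. emb (i, x)) (gaifman s (S i))" for i
  have H: "wf_graph (H i) \<and> p (H i) \<le> k" if i: "i \<in> I" for i
  proof -
    have wf: "wf_graph (gaifman s (S i))" using S[OF i] by (simp add: wf_graph_gaifman)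
    have inj: "inj_on (\<lambda>x. emb (i, x)) (verts (gaifman s (S i)))"
      using inj_on_copy[OF i] dom_S[OF i] by simp
    show ?thesis
      using wf_graph_image[OF wf inj] param_graph_image[OF gp wf inj] S[OF i] unfolding H_def by simp
  qed
  have verts_H: "verts (H i) = (\<lambda>x. emb (i, x)) ` D" if "i \<in> I" for i
    using dom_S[OF that] unfolding H_def graph_image_def by simp
  have "verts (H i) \<inter> verts (H j) = {}" if ij: "i \<in> I" "j \<in> I" "i \<noteq> j" for i j
  proof -
    have "emb (i, x) \<noteq> emb (j, y)" if "x \<in> D" "y \<in> D" for x y
      using inj_onD[OF emb, of "(i, x)" "(j, y)"] ij that by auto
    then show ?thesis unfolding verts_H[OF ij(1)] verts_H[OF ij(2)] by blast
  qed
  then have union: "wf_graph (graph_Union I H) \<and> p (graph_Union I H) \<le> k"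
    using param_graph_Union_le[OF mu fin(1) I, of H k] H by blast
  have "edges (gaifman s ?B) \<subseteq> edges (graph_Union I H)"
    using edges_gaifman_disjoint_copies S unfolding graph_Union_def H_def by fastforce
  moreover have "verts (gaifman s ?B) = verts (graph_Union I H)"
    by (auto simp: graph_Union_def H_def graph_image_def dom_disjoint_copies dom_S)
  ultimately have "subgraph (gaifman s ?B) (graph_Union I H)"
    unfolding subgraph_def using wf_graph_gaifman[OF is_struct_disjoint_copies[OF I D]] S q by auto
  then show ?thesis using monotone_paramD[OF mo] union by (meson order.trans)
qed

lemma opt_disjoint_copies_le:
  assumes C: "is_struct s C" and I: "I \<noteq> {}" and D: "D \<noteq> {}"
    and q: "\<And>i. i \<in> I \<Longrightarrow> 0 \<le> q i" and q_sum: "(\<Sum>i\<in>I. of_rat (q i)) \<le> (1::real)"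
    and M: "0 \<le> M" "\<And>i h. i \<in> I \<Longrightarrow> h ` D \<subseteq> dom C \<Longrightarrow> hom_value s (S i) C h \<le> M"
  shows "opt s (disjoint_copies I D emb q S) C \<le> M"
proof -
  obtain h where h: "h \<in> dom (disjoint_copies I D emb q S) \<rightarrow>\<^sub>E dom C"
      "opt s (disjoint_copies I D emb q S) C = hom_value s (disjoint_copies I D emb q S) C h"
    by (rule opt_attained[of "disjoint_copies I D emb q S" C s])
       (use fin C in \<open>auto simp: dom_disjoint_copies is_struct_def\<close>)
  have "hom_value s (disjoint_copies I D emb q S) C h \<le> (\<Sum>i\<in>I. of_rat (q i) * M)"
    unfolding hom_value_disjoint_copies
  proof (rule sum_mono)
    fix i assume i: "i \<in> I"
    have "(\<lambda>x. h (emb (i, x))) ` D \<subseteq> dom C" using h(1) i by (auto simp: dom_disjoint_copies)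
    then show "of_rat (q i) * hom_value s (S i) C (\<lambda>x. h (emb (i, x))) \<le> of_rat (q i) * M"
      using M(2)[OF i] q[OF i] by (intro mult_left_mono) auto
  qed
  also have "\<dots> = (\<Sum>i\<in>I. of_rat (q i)) * M" by (simp add: sum_distrib_right)
  also have "\<dots> \<le> 1 * M" by (rule mult_right_mono[OF q_sum M(1)])
  finally show ?thesis using h(2) by simp
qed

end

lemma opt_disjoint_copies_without_le:
  assumes fin: "finite FF" "finite (dom A)" and emb: "inj_on emb (FF \<times> dom A)"
    and ne: "FF \<noteq> {}" and A: "is_struct s A" and C: "is_struct s C"
    and q: "\<And>F. F \<in> FF \<Longrightarrow> 0 \<le> q F" "(\<Sum>F\<in>FF. of_rat (q F)) \<le> (1::real)"
  shows "opt s (disjoint_copies FF (dom A) emb q (\<lambda>F. struct_without F A)) C \<le> opt s A C"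
proof (rule opt_disjoint_copies_le[OF fin emb dom_struct_without C ne _ q opt_nonneg[OF A C]])
  show "dom A \<noteq> {}" using A unfolding is_struct_def by simp
  show "hom_value s (struct_without F A) C h \<le> opt s A C" if "h ` dom A \<subseteq> dom C" for F h
    using hom_value_struct_without_le[OF A C that] hom_value_le_opt[OF fin(2) _ that] C
    unfolding is_struct_def by (meson order.trans)
qed

lemma opt_disjoint_copies_without_ge:
  assumes fin: "finite FF" "finite (dom A)" and emb: "inj_on emb (FF \<times> dom A)"
    and A: "is_struct s A" and C: "is_struct s C"
    and surviving: "\<And>f xs. f \<in> sig_syms s \<Longrightarrow> xs \<in> tuples (dom A) (sig_ar s f) \<Longrightarrow>
       c \<le> (\<Sum>F\<in>FF. if \<exists>e\<in>F. e \<subseteq> set xs then 0 else of_rat (q F))"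
  shows "c * opt s A C \<le> opt s (disjoint_copies FF (dom A) emb q (\<lambda>F. struct_without F A)) C"
proof -
  let ?B = "disjoint_copies FF (dom A) emb q (\<lambda>F. struct_without F A)"
  let ?dec = "\<lambda>y. snd (inv_into (FF \<times> dom A) emb y)"
  have finC: "finite (dom C)" "dom C \<noteq> {}" using C unfolding is_struct_def by auto
  obtain hA where hA: "hA \<in> dom A \<rightarrow>\<^sub>E dom C" "opt s A C = hom_value s A C hA"
    by (rule opt_attained[of A C s]) (use fin finC in auto)
  have "c * hom_value s A C hA = (\<Sum>f\<in>sig_syms s. \<Sum>xs\<in>tuples (dom A) (sig_ar s f).
      of_rat (interp A f xs) * of_rat (interp C f (map hA xs)) * c)"
    unfolding hom_value_def by (simp add: sum_distrib_left sum_distrib_right algebra_simps)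
  also have "\<dots> \<le> (\<Sum>f\<in>sig_syms s. \<Sum>xs\<in>tuples (dom A) (sig_ar s f).
      of_rat (interp A f xs) * of_rat (interp C f (map hA xs)) *
      (\<Sum>F\<in>FF. if \<exists>e\<in>F. e \<subseteq> set xs then 0 else of_rat (q F)))"
  proof (intro sum_mono mult_left_mono)
    fix f xs assume f: "f \<in> sig_syms s" and xs: "xs \<in> tuples (dom A) (sig_ar s f)"
    have "map hA xs \<in> tuples (dom C) (sig_ar s f)" using xs hA(1) by (intro map_in_tuples) auto
    then show "0 \<le> (of_rat (interp A f xs) * of_rat (interp C f (map hA xs)) :: real)"
      using A C f xs unfolding is_struct_def by simp
  qed (rule surviving)
  also have "\<dots> = (\<Sum>F\<in>FF. of_rat (q F) * hom_value s (struct_without F A) C hA)"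
    by (rule sum_hom_value_struct_without[symmetric])
  also have "\<dots> = hom_value s ?B C (\<lambda>y. hA (?dec y))"
    unfolding hom_value_disjoint_copies[OF fin emb dom_struct_without]
    using emb by (intro sum.cong refl arg_cong2[where f = "(*)"] hom_value_cong) (simp_all add: inv_into_f_f)
  also have "\<dots> \<le> opt s ?B C"
    using hA(1) emb fin finC
    by (intro hom_value_le_opt) (auto simp: dom_disjoint_copies[OF fin emb dom_struct_without] inv_into_f_f)
  finally show ?thesis using hA(2) by simp
qed

lemma prob_contains_subset_le:
  fixes \<pi> :: "'a set set pmf"
  assumes E: "finite E" "\<forall>F\<in>set_pmf \<pi>. F \<subseteq> E"
    and rare: "\<forall>e\<in>E. measure_pmf.prob \<pi> {F. e \<in> F} \<le> c" "0 \<le> c" and X: "finite X"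
  shows "measure_pmf.prob \<pi> {F. \<exists>e\<in>F. e \<subseteq> X} \<le> 2 ^ card X * c"
proof -
  define S where "S = {e\<in>E. e \<subseteq> X}"
  have "measure_pmf.prob \<pi> {F. \<exists>e\<in>F. e \<subseteq> X} = measure_pmf.prob \<pi> ({F. \<exists>e\<in>F. e \<subseteq> X} \<inter> set_pmf \<pi>)"
    by (simp add: measure_Int_set_pmf)
  also have "\<dots> \<le> measure_pmf.prob \<pi> (\<Union>e\<in>S. {F. e \<in> F})"
    by (rule measure_pmf.finite_measure_mono) (use E(2) in \<open>auto simp: S_def\<close>)
  also have "\<dots> \<le> (\<Sum>e\<in>S. measure_pmf.prob \<pi> {F. e \<in> F})"
    by (rule measure_pmf.finite_measure_subadditive_finite) (use E(1) in \<open>auto simp: S_def\<close>)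
  also have "\<dots> \<le> (\<Sum>e\<in>S. c)" by (rule sum_mono) (use rare(1) in \<open>auto simp: S_def\<close>)
  also have "\<dots> \<le> 2 ^ card X * c"
  proof -
    have "card S \<le> card (Pow X)" using X by (intro card_mono) (auto simp: S_def)
    also have "\<dots> = 2 ^ card X" using X by (rule card_Pow)
    finally have "real (card S) \<le> 2 ^ card X" by (metis of_nat_le_iff of_nat_numeral of_nat_power)
    then have "real (card S) * c \<le> 2 ^ card X * c" by (rule mult_right_mono[OF _ rare(2)])
    then show ?thesis by simp
  qed
  finally show ?thesis .
qed

lemma rat_approx_below:
  fixes a :: "'a \<Rightarrow> real"
  assumes "\<And>x. x \<in> X \<Longrightarrow> 0 < a x" "0 < \<eta>"
  obtains q where "\<And>x. x \<in> X \<Longrightarrow> 0 \<le> q x \<and> of_rat (q x) \<le> a x \<and> a x - of_rat (q x) \<le> \<eta>"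
proof -
  have "\<exists>r. 0 \<le> r \<and> of_rat r \<le> a x \<and> a x - of_rat r \<le> \<eta>" if x: "x \<in> X" for x
  proof -
    have "max 0 (a x - \<eta>) < a x" using assms(1)[OF x] assms(2) by auto
    then obtain y where y: "y \<in> \<rat>" "max 0 (a x - \<eta>) < y" "y < a x" using Rats_dense_in_real by blast
    then obtain r where "y = of_rat r" by (auto elim: Rats_cases)
    then show ?thesis using y by (intro exI[of _ r]) (auto simp: zero_le_of_rat_iff[symmetric])
  qed
  then show ?thesis using that by metis
qed

lemma inj_on_into_infinite:
  assumes "infinite (UNIV :: 'b set)" "finite (X :: 'a set)"
  obtains f :: "'a \<Rightarrow> 'b" where "inj_on f X"
proof -
  obtain Y :: "'b set" where "finite Y" "card Y = card X"
    using infinite_arbitrarily_large[OF assms(1)] by blast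
  then show ?thesis using card_le_inj[OF assms(2)] that by (metis order_refl)
qed

lemma surviving_mass_ge:
  fixes \<pi> :: "'a set set pmf"
  assumes E: "finite E" "\<forall>F\<in>set_pmf \<pi>. F \<subseteq> E"
    and rare: "\<forall>e\<in>E. measure_pmf.prob \<pi> {F. e \<in> F} \<le> c" "0 \<le> c" and X: "finite X"
    and q: "\<And>F. F \<in> set_pmf \<pi> \<Longrightarrow> pmf \<pi> F - of_rat (q F) \<le> \<eta>" "0 \<le> \<eta>"
  shows "1 - 2 ^ card X * c - real (card (set_pmf \<pi>)) * \<eta>
    \<le> (\<Sum>F\<in>set_pmf \<pi>. if \<exists>e\<in>F. e \<subseteq> X then 0 else of_rat (q F))"
proof -
  let ?hit = "{F. \<exists>e\<in>F. e \<subseteq> X}"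
  have fin: "finite (set_pmf \<pi>)" using E by (meson Pow_iff finite_Pow_iff finite_subset subsetI)
  have "(\<Sum>F\<in>set_pmf \<pi>. if F \<in> ?hit then 0 else pmf \<pi> F) = (\<Sum>F\<in>{F\<in>set_pmf \<pi>. F \<notin> ?hit}. pmf \<pi> F)"
    by (subst sum.inter_filter[OF fin]) (auto intro: sum.cong)
  also have "\<dots> = measure_pmf.prob \<pi> {F\<in>set_pmf \<pi>. F \<notin> ?hit}"
    by (rule measure_measure_pmf_finite[symmetric]) (use fin in simp)
  also have "{F\<in>set_pmf \<pi>. F \<notin> ?hit} = (UNIV - ?hit) \<inter> set_pmf \<pi>" by auto
  also have "measure_pmf.prob \<pi> \<dots> = 1 - measure_pmf.prob \<pi> ?hit"
    using measure_pmf.prob_compl[of ?hit \<pi>] by (simp add: measure_Int_set_pmf)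
  finally have "1 - 2 ^ card X * c \<le> (\<Sum>F\<in>set_pmf \<pi>. if F \<in> ?hit then 0 else pmf \<pi> F)"
    using prob_contains_subset_le[OF E rare X] by linarith
  also have "\<dots> \<le> (\<Sum>F\<in>set_pmf \<pi>. (if F \<in> ?hit then 0 else of_rat (q F)) + \<eta>)"
  proof (rule sum_mono)
    fix F assume "F \<in> set_pmf \<pi>"
    then show "(if F \<in> ?hit then 0 else pmf \<pi> F) \<le> (if F \<in> ?hit then 0 else of_rat (q F)) + \<eta>"
      using q(1)[of F] q(2) by auto
  qed
  finally show ?thesis by (simp add: sum.distrib)
qed

lemma exp_le_surviving_mass:
  fixes \<pi> :: "'a set set pmf"
  assumes E: "finite E" "\<forall>F\<in>set_pmf \<pi>. F \<subseteq> E"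
    and rare: "\<forall>e\<in>E. measure_pmf.prob \<pi> {F. e \<in> F} \<le> (1 - exp (-\<epsilon>)) / (2 * 2 ^ r)" and \<epsilon>: "0 < \<epsilon>"
    and q: "\<And>F. F \<in> set_pmf \<pi> \<Longrightarrow> pmf \<pi> F - of_rat (q F) \<le> \<eta>" "0 \<le> \<eta>"
    and \<eta>: "real (card (set_pmf \<pi>)) * \<eta> = (1 - exp (-\<epsilon>)) / 2"
    and X: "finite X" "card X \<le> r"
  shows "exp (-\<epsilon>) \<le> (\<Sum>F\<in>set_pmf \<pi>. if \<exists>e\<in>F. e \<subseteq> X then 0 else of_rat (q F))"
proof -
  have "(2::real) ^ card X \<le> 2 ^ r" using X(2) by (rule power_increasing) simp
  then have "2 ^ card X * ((1 - exp (-\<epsilon>)) / (2 * 2 ^ r)) \<le> 2 ^ r * ((1 - exp (-\<epsilon>)) / (2 * 2 ^ r :: real))"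
    by (rule mult_right_mono) (use \<epsilon> in simp)
  then have "2 ^ card X * ((1 - exp (-\<epsilon>)) / (2 * 2 ^ r)) \<le> (1 - exp (-\<epsilon>)) / (2::real)"
    by simp
  then have "exp (-\<epsilon>) \<le> 1 - 2 ^ card X * ((1 - exp (-\<epsilon>)) / (2 * 2 ^ r)) - real (card (set_pmf \<pi>)) * \<eta>"
    unfolding \<eta> by argo
  also have "\<dots> \<le> (\<Sum>F\<in>set_pmf \<pi>. if \<exists>e\<in>F. e \<subseteq> X then 0 else of_rat (q F))"
    by (rule surviving_mass_ge[OF E rare _ X(1) q]) (use \<epsilon> in simp)
  finally show ?thesis .
qed

lemma close_struct_of_fragile_distribution:
  fixes A :: "'v struct" and \<pi> :: "'v set set pmf"
  assumes gp: "graph_parameter p" and mo: "monotone_param p" and mu: "max_on_disjoint_union p"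
    and inf: "infinite (UNIV :: 'v set)"
    and A: "is_struct s A" and ar: "\<forall>f\<in>sig_syms s. sig_ar s f \<le> r" and \<epsilon>: "\<epsilon> > 0"
    and good: "\<forall>F\<in>set_pmf \<pi>. F \<subseteq> edges (gaifman s A) \<and> p (delete_edges (gaifman s A) F) \<le> k"
    and rare: "\<forall>e\<in>edges (gaifman s A). measure_pmf.prob \<pi> {F. e \<in> F} \<le> (1 - exp (-\<epsilon>)) / (2 * 2 ^ r)"
  shows "\<exists>B :: 'v struct. is_struct s B \<and> p (gaifman s B) \<le> k \<and> d_opt s A B \<le> ereal \<epsilon>"
proof -
  let ?G = "gaifman s A" and ?FF = "set_pmf \<pi>"
  have wfG: "wf_graph ?G" by (rule wf_graph_gaifman[OF A])
  have finA: "finite (dom A)" "dom A \<noteq> {}" using A unfolding is_struct_def by auto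
  have finFF: "finite ?FF"
    using good finite_edges[OF wfG] by (meson Pow_iff finite_Pow_iff finite_subset subsetI)
  have neFF: "?FF \<noteq> {}" by (rule set_pmf_not_empty)
  define \<eta> where "\<eta> = (1 - exp (-\<epsilon>)) / 2 / real (card ?FF)"
  have \<eta>: "0 < \<eta>" "real (card ?FF) * \<eta> = (1 - exp (-\<epsilon>)) / 2"
    using \<epsilon> finFF neFF by (auto simp: \<eta>_def card_gt_0_iff)
  \<comment> \<open>Rounding \<open>\<pi>\<close> down costs half of the budget \<open>1 - exp (-\<epsilon>)\<close>; tuples meeting a
    deleted edge cost the other half.\<close>
  obtain q where q: "\<And>F. F \<in> ?FF \<Longrightarrow> 0 \<le> q F \<and> of_rat (q F) \<le> pmf \<pi> F \<and> pmf \<pi> F - of_rat (q F) \<le> \<eta>"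
    by (rule rat_approx_below[of ?FF "pmf \<pi>" \<eta>]) (use \<eta> in \<open>auto simp: set_pmf_iff\<close>)
  obtain emb :: "'v set set \<times> 'v \<Rightarrow> 'v" where emb: "inj_on emb (?FF \<times> dom A)"
    using inj_on_into_infinite[OF inf, of "?FF \<times> dom A"] finFF finA by blast
  define B where "B = disjoint_copies ?FF (dom A) emb q (\<lambda>F. struct_without F A)"
  note copies = finFF finA(1) emb dom_struct_without
  have B: "is_struct s B"
    unfolding B_def using is_struct_struct_without[OF A] q
    by (intro is_struct_disjoint_copies[where S = "\<lambda>F. struct_without F A", OF copies neFF finA(2)]) auto
  have "p (gaifman s (struct_without F A)) \<le> k" if "F \<in> ?FF" for F
    using param_gaifman_struct_without_le[OF mo A, of F] good that by (meson order.trans)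
  then have p_B: "p (gaifman s B) \<le> k"
    unfolding B_def using q is_struct_struct_without[OF A]
    by (intro param_gaifman_disjoint_copies_le[where S = "\<lambda>F. struct_without F A", OF copies gp mo mu neFF finA(2)])
       auto
  have upper: "opt s B C \<le> opt s A C" if C: "is_struct s C" for C
    unfolding B_def
  proof (rule opt_disjoint_copies_without_le[OF finFF finA(1) emb neFF A C])
    show "(\<Sum>F\<in>?FF. of_rat (q F)) \<le> (1::real)"
      using sum_mono[of ?FF "\<lambda>F. of_rat (q F)" "pmf \<pi>"] q sum_pmf_eq_1[OF finFF, of \<pi>] by auto
  qed (use q in auto)
  have lower: "exp (-\<epsilon>) * opt s A C \<le> opt s B C" if C: "is_struct s C" for C
    unfolding B_def
  proof (rule opt_disjoint_copies_without_ge[OF finFF finA(1) emb A C])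
    fix f xs assume "f \<in> sig_syms s" "xs \<in> tuples (dom A) (sig_ar s f)"
    then have "card (set xs) \<le> r" using ar card_length[of xs] unfolding tuples_def by fastforce
    then show "exp (-\<epsilon>) \<le> (\<Sum>F\<in>?FF. if \<exists>e\<in>F. e \<subseteq> set xs then 0 else of_rat (q F))"
      using exp_le_surviving_mass[OF finite_edges[OF wfG] _ rare \<epsilon> _ _ \<eta>(2)] good q \<eta>(1) by auto
  qed
  have "d_opt s A B \<le> ereal \<epsilon>" by (rule d_opt_leI[OF upper lower B less_imp_le[OF \<epsilon>]])
  then show ?thesis using B p_B by blast
qed

lemma frac_edge_fragile_imp_pliable:
  assumes gp: "graph_parameter p" and mo: "monotone_param p" and mu: "max_on_disjoint_union p"
    and inf: "infinite (UNIV :: 'v set)" and fr: "frac_edge_fragile p (\<G> :: 'v graph set)"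
  shows "pliable p (struct_class \<G> r)"
  unfolding pliable_def
proof (intro allI impI)
  fix \<epsilon> :: real assume \<epsilon>: "\<epsilon> > 0"
  then have "0 < (1 - exp (-\<epsilon>)) / (2 * 2 ^ r)" by simp
  from fr[unfolded frac_edge_fragile_def, rule_format, OF this]
  obtain k where k: "\<forall>G\<in>\<G>. \<exists>\<pi> :: 'v set set pmf.
      (\<forall>F\<in>set_pmf \<pi>. F \<subseteq> edges G \<and> p (delete_edges G F) \<le> k) \<and>
      (\<forall>e\<in>edges G. measure_pmf.prob \<pi> {F. e \<in> F} \<le> (1 - exp (-\<epsilon>)) / (2 * 2 ^ r))"
    by (elim exE)
  have close: "\<exists>B :: 'v struct. is_struct s B \<and> p (gaifman s B) \<le> k \<and> d_opt s A B \<le> ereal \<epsilon>"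
    if "(s, A) \<in> struct_class \<G> r" for s A
  proof -
    have A: "is_struct s A" and ar: "\<forall>f\<in>sig_syms s. sig_ar s f \<le> r" and G: "gaifman s A \<in> \<G>"
      using that unfolding struct_class_def by auto
    obtain \<pi> :: "'v set set pmf" where
      "\<forall>F\<in>set_pmf \<pi>. F \<subseteq> edges (gaifman s A) \<and> p (delete_edges (gaifman s A) F) \<le> k"
      "\<forall>e\<in>edges (gaifman s A). measure_pmf.prob \<pi> {F. e \<in> F} \<le> (1 - exp (-\<epsilon>)) / (2 * 2 ^ r)"
      using bspec[OF k G] by (elim exE conjE)
    then show ?thesis by (rule close_struct_of_fragile_distribution[OF gp mo mu inf A ar \<epsilon>])
  qed
  show "\<exists>k. \<forall>(s, A)\<in>struct_class \<G> r. \<exists>B :: 'v struct.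
      is_struct s B \<and> p (gaifman s B) \<le> k \<and> d_opt s A B \<le> ereal \<epsilon>"
  proof (intro exI[of _ k] ballI)
    fix x assume "x \<in> struct_class \<G> r"
    then show "case x of (s, A) \<Rightarrow> \<exists>B :: 'v struct.
        is_struct s B \<and> p (gaifman s B) \<le> k \<and> d_opt s A B \<le> ereal \<epsilon>"
      using close by (cases x) simp
  qed
qed

theorem lemma25:
  fixes p :: "'v graph \<Rightarrow> nat" and \<G> :: "'v graph set" and r :: nat
  assumes "infinite (UNIV :: 'v set)"
    and "graph_parameter p"
    and "monotone_param p"
    and "max_on_disjoint_union p"
    and "\<forall>G\<in>\<G>. wf_graph G"
    and "r \<ge> 2"
  shows "frac_edge_fragile p \<G> \<longleftrightarrow> pliable p (struct_class \<G> r)"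
  using frac_edge_fragile_imp_pliable[OF assms(2-4,1)] pliable_imp_frac_edge_fragile[OF assms(2-6)]
  by blast

end
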